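(* Let $x,y\in X$ with $\deg(x)=\deg(y)=i$ for some positive integer $i$. If the pair $x,y$ is asymptotic (i.e. $\lim_{n\to\infty}d(T^n(x),T^n(y))=0$), then $x=y$.
   Context: Paths and cycles: a graph is $G=(V,E)$ with $V$ finite and $E\subset V\times V$. A path is a finite sequence of vertices $(u_0,\dots,u_L)$ with $(u_j,u_{j+1})\in E$; its length is $|\cdot|=L$; a cycle is a path with $u_0=u_L$. For paths where one ends where the next starts, $+$ denotes concatenation and $a\,c$ means the cycle $c$ traversed $a$ times. Construction: $G_0=(V_0,E_0)$ with $V_0=\{v_{0,0}\}$, $E_0=\{e_{0,0}\}$, $e_{0,0}=(v_{0,0},v_{0,0})$. For $n\geq1$, $G_n=(V_n,E_n)$ consists of a vertex $v_{n,0}$, the loop $e_{n,0}=(v_{n,0},v_{n,0})$, and $n$ cycles $c_{n,1},\dots,c_{n,n}$, each starting and ending at $v_{n,0}$, whose vertices other than $v_{n,0}$ are pairwise distinct (within each cycle and across cycles); $V_n$ is the set of all these vertices and $E_n$ consists of $e_{n,0}$ and the edges of the cycles. The maps $\varphi_n\colon V_{n+1}\to V_n$ and the lengths of the cycles $c_{n+1,i}$ are defined together: $\varphi_n(v_{n+1,0})=v_{n,0}$, and for each $i$ a path $P_{n,i}$ in $G_n$ from $v_{n,0}$ to $v_{n,0}$ is given; $c_{n+1,i}$ has length $|P_{n,i}|$ and $\varphi_n$ maps its $j$-th vertex to the $j$-th vertex of $P_{n,i}$ (written $\varphi_n(c_{n+1,i})=P_{n,i}$). The paths are: $P_{0,1}=10\,e_{0,0}$;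 for $n\geq1$: $P_{n,i}=e_{n,0}+2c_{n,i}+2c_{n,i+1}+\dots+2c_{n,n}+e_{n,0}$ for $2\leq i\leq n$; $P_{n,n+1}=(n+2)^2\big(\sum_{i=1}^n|c_{n,i}|\big)\,e_{n,0}$; and $P_{n,1}=(1\,e_{n,0}+2c_{n,1})+(2\,e_{n,0}+2c_{n,1})+\dots+(k_n\,e_{n,0}+2c_{n,1})+e_{n,0}+2c_{n,2}+\dots+2c_{n,n}+e_{n,0}$, where $k_n=2\big(1+\sum_{i=1}^n|c_{n,i}|\big)$. Let $X=\{x\in\prod_{n\geq0}V_n:\varphi_n(x_{n+1})=x_n\ \forall n\}$ with metric $d(x,y)=2^{-\min\{i:x_i\neq y_i\}}$ ($d(x,x)=0$); $X$ is a compact zero-dimensional metric space, and $T\colon X\to X$ defined by $T(x)=y$ iff $(x_n,y_n)\in E_n$ for all $n$ is a well-defined homeomorphism. Write $x_n$ for the $n$-th coordinate of $x$. Degree: for $v\in V_n$, $\deg(v)=+\infty$ if $v=v_{n,0}$ and $\deg(v)=i$ if $v$ is a vertex of $c_{n,i}$ different from $v_{n,0}$; for $x\in X$, $\deg(x)=\min_n\deg(x_n)$. *)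

theory Defs
  imports Complex_Main "HOL-Library.Extended_Nat"
begin

text \<open>Vertices of G_n are encoded as pairs of naturals: the centre v_{n,0} is (0,0);
  the j-th vertex (1 \<le> j < |c_{n,i}|) of the cycle c_{n,i} is (i,j).
  A path from v_{n,0} to v_{n,0} of length L is encoded as the list of its first L
  vertices u_0,...,u_{L-1} (the final vertex u_L = v_{n,0} is omitted); concatenation
  of such closed paths is then list append.\<close>

type_synonym vert = "nat \<times> nat"

definition centre :: vert where "centre = (0,0)"

text \<open>The cycle c_{n,i}, given the length function Ln i = |c_{n,i}|.\<close>
definition cyc :: "(nat \<Rightarrow> nat) \<Rightarrow> nat \<Rightarrow> vert list" where
  "cyc Ln i = centre # map (\<lambda>j. (i,j)) [1..<Ln i]"

definition rep :: "nat \<Rightarrow> vert list \<Rightarrow> vert list" where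
  "rep a c = concat (replicate a c)"

definition eloop :: "vert list" where "eloop = [centre]"

definition Path :: "nat \<Rightarrow> (nat \<Rightarrow> nat) \<Rightarrow> nat \<Rightarrow> vert list" where
  "Path n Ln i =
    (if n = 0 then (if i = 1 then rep 10 eloop else [])
     else if i = n + 1 then rep ((n+2)^2 * (\<Sum>k=1..n. Ln k)) eloop
     else if 2 \<le> i \<and> i \<le> n then
       eloop @ concat (map (\<lambda>k. rep 2 (cyc Ln k)) [i..<n+1]) @ eloop
     else if i = 1 then
       concat (map (\<lambda>a. rep a eloop @ rep 2 (cyc Ln 1)) [1..<2 * (1 + (\<Sum>k=1..n. Ln k)) + 1])
       @ eloop @ concat (map (\<lambda>k. rep 2 (cyc Ln k)) [2..<n+1]) @ eloop
     else [])"

text \<open>Cycle lengths: cyclen n i = |c_{n,i}| (meaningful for 1 \<le> i \<le> n).\<close>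
primrec cyclen :: "nat \<Rightarrow> nat \<Rightarrow> nat" where
  "cyclen 0 = (\<lambda>i. 0)"
| "cyclen (Suc n) = (\<lambda>i. length (Path n (cyclen n) i))"

definition P :: "nat \<Rightarrow> nat \<Rightarrow> vert list" where
  "P n i = Path n (cyclen n) i"

text \<open>The j-th vertex of c_{n,i}, for 0 \<le> j \<le> |c_{n,i}|.\<close>
definition cv :: "nat \<Rightarrow> nat \<Rightarrow> nat \<Rightarrow> vert" where
  "cv n i j = (if j = 0 \<or> cyclen n i \<le> j then centre else (i,j))"

definition V :: "nat \<Rightarrow> vert set" where
  "V n = {centre} \<union> {(i,j). 1 \<le> i \<and> i \<le> n \<and> 1 \<le> j \<and> j < cyclen n i}"

definition E :: "nat \<Rightarrow> (vert \<times> vert) set" where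
  "E n = {(centre, centre)} \<union>
     {(u,v). \<exists>i. 1 \<le> i \<and> i \<le> n \<and> (\<exists>j < cyclen n i. u = cv n i j \<and> v = cv n i (Suc j))}"

text \<open>phi n : V_{n+1} \<rightarrow> V_n.\<close>
definition phi :: "nat \<Rightarrow> vert \<Rightarrow> vert" where
  "phi n v = (if v = centre then centre else P n (fst v) ! snd v)"

definition X :: "(nat \<Rightarrow> vert) set" where
  "X = {x. (\<forall>n. x n \<in> V n) \<and> (\<forall>n. phi n (x (Suc n)) = x n)}"

definition dist_X :: "(nat \<Rightarrow> vert) \<Rightarrow> (nat \<Rightarrow> vert) \<Rightarrow> real" where
  "dist_X x y = (if x = y then 0 else (1/2) ^ (LEAST i. x i \<noteq> y i))"

definition T :: "(nat \<Rightarrow> vert) \<Rightarrow> (nat \<Rightarrow> vert)" where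
  "T x = (THE y. y \<in> X \<and> (\<forall>n. (x n, y n) \<in> E n))"

definition degv :: "vert \<Rightarrow> enat" where
  "degv v = (if v = centre then \<infinity> else enat (fst v))"

definition deg :: "(nat \<Rightarrow> vert) \<Rightarrow> enat" where
  "deg x = (INF n. degv (x n))"

end

theory Submission
  imports Defs
begin

text \<open>A point of degree i lies, from some level on, on the cycles c_{n,i}, and its distance to the
  end of the cycle grows without bound; on such points T just advances one step along the
  cycles. If x and y are asymptotic, their orbits agree on every fixed level from some time on.
  If afterwards the orbit of x visits c_{2,1}, the rigid spiral of P_{n,1} lets this agreement
  climb level by level, so both orbits agree everywhere at one time and x = y. Otherwise, at high
  levels x and y sit on the same cycle at a fixed offset (for i = 1 necessarily on the last
  spiral copy of c_{n,1}). Their low-level projections are then periodic with that offset as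
  period; since the end of the cycle projects to the centre, periodicity forces an earlier
  stretch to project to the centre too, but by construction that stretch runs through
  c_{n,i+1} (resp. c_{n,2}), which does not.\<close>

declare upt_Suc[simp del] cyclen.simps(2)[simp del]

lemma cyclen_Suc: "cyclen (Suc n) i = length (P n i)"
  by (simp add: P_def cyclen.simps(2))

lemma nth_append_mem_left: "q < length A \<Longrightarrow> (A @ B) ! q \<in> set A"
  by (simp add: nth_append)

lemma nth_append_mem_right: "q < length (A @ B) \<Longrightarrow> length A \<le> q \<Longrightarrow> (A @ B) ! q \<in> set B"
  by (simp add: nth_append)

lemma length_cyc: "length (cyc Ln i) = (if Ln i = 0 then 1 else Ln i)"
  by (simp add: cyc_def)

lemma length_cyc_eq: "Ln i \<ge> 1 \<Longrightarrow> length (cyc Ln i) = Ln i"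
  by (simp add: length_cyc)

lemma set_cyc: "set (cyc Ln k) = insert centre {(k,j)| j. 1 \<le> j \<and> j < Ln k}"
  by (auto simp add: cyc_def)

lemma length_rep[simp]: "length (rep a c) = a * length c"
  by (simp add: rep_def length_concat sum_list_replicate)

lemma set_rep: "set (rep a c) = (if a = 0 then {} else set c)"
  by (simp add: rep_def)

lemma rep_0[simp]: "rep 0 c = []"
  by (simp add: rep_def)

lemma rep_Suc: "rep (Suc a) c = c @ rep a c"
  by (simp add: rep_def)

lemma rep_2: "rep 2 c = c @ c"
  by (simp add: rep_def numeral_2_eq_2)

lemma eloop_eq[simp]: "eloop = [centre]"
  by (simp add: eloop_def)

definition spiral_count :: "nat \<Rightarrow> nat" where
  "spiral_count n = 2 * (1 + (\<Sum>k=1..n. cyclen n k))"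

definition spiral :: "nat \<Rightarrow> vert list" where
  "spiral n = concat (map (\<lambda>a. rep a [centre] @ rep 2 (cyc (cyclen n) 1)) [1..<spiral_count n + 1])"

definition spiral_len :: "nat \<Rightarrow> nat" where
  "spiral_len n = length (spiral n)"

definition tail :: "nat \<Rightarrow> nat \<Rightarrow> vert list" where
  "tail n i = concat (map (\<lambda>k. rep 2 (cyc (cyclen n) k)) [i..<n+1])"

lemma P_0: "P 0 i = (if i = 1 then rep 10 [centre] else [])"
  by (simp add: P_def Path_def)

lemma P_top: "1 \<le> n \<Longrightarrow> P n (Suc n) = rep ((n+2)^2 * (\<Sum>k=1..n. cyclen n k)) [centre]"
  by (simp add: P_def Path_def)

lemma P_mid: "2 \<le> i \<Longrightarrow> i \<le> n \<Longrightarrow> P n i = centre # tail n i @ [centre]"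
  by (simp add: P_def Path_def tail_def)

lemma P_1: "1 \<le> n \<Longrightarrow> P n 1 = spiral n @ centre # tail n 2 @ [centre]"
  by (simp add: P_def Path_def spiral_def spiral_count_def tail_def)

lemma P_other: "i = 0 \<or> n + 1 < i \<Longrightarrow> P n i = []"
  by (auto simp add: P_def Path_def)

lemma P_cases:
  obtains (zero) "n = 0" | (empty) "P n i = []" | (top) "1 \<le> n" "i = n + 1"
  | (mid) "2 \<le> i" "i \<le> n" | (one) "1 \<le> n" "i = 1"
proof -
  consider "n = 0" | "i = 0 \<or> n + 1 < i" | "1 \<le> n" "i = n + 1" | "2 \<le> i" "i \<le> n" | "1 \<le> n" "i = 1"
    by linarith
  thus ?thesis using that P_other[of i n] by blast
qed

lemma tail_Cons: "i \<le> n \<Longrightarrow> tail n i = cyc (cyclen n) i @ cyc (cyclen n) i @ tail n (Suc i)"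
  by (simp add: tail_def upt_conv_Cons rep_2)

lemma set_tail: "v \<in> set (tail n i) \<Longrightarrow> v = centre \<or> i \<le> fst v"
  unfolding tail_def by (auto simp add: set_rep set_cyc split: if_splits)

lemma spiral_last: "\<exists>L. spiral n = L @ cyc (cyclen n) 1"
proof -
  have "[1..<spiral_count n + 1] = [1..<spiral_count n] @ [spiral_count n]"
    by (simp add: spiral_count_def upt_Suc_append)
  thus ?thesis unfolding spiral_def by (simp add: rep_2)
qed

lemma set_spiral: "v \<in> set (spiral n) \<Longrightarrow> v = centre \<or> fst v = 1"
  unfolding spiral_def by (auto simp add: set_rep set_cyc split: if_splits)

lemma le_sum_Icc: "1 \<le> k \<Longrightarrow> k \<le> n \<Longrightarrow> (f::nat\<Rightarrow>nat) k \<le> (\<Sum>j=1..n. f j)"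
  by (rule member_le_sum) auto

lemma cyclen_ge_Suc: "1 \<le> k \<Longrightarrow> k \<le> n \<Longrightarrow> n + 1 \<le> cyclen n k"
proof (induction n arbitrary: k)
  case 0 then show ?case by simp
next
  case (Suc n)
  show ?case
  proof (cases "n = 0")
    case True
    with Suc.prems show ?thesis by (simp add: cyclen_Suc P_0)
  next
    case False
    have IH1: "n + 1 \<le> cyclen n 1" using Suc.IH[of 1] False by simp
    consider "k = n + 1" | "2 \<le> k" "k \<le> n" | "k = 1" using Suc.prems by linarith
    then show ?thesis
    proof cases
      case 1
      have "1 \<le> (\<Sum>j=1..n. cyclen n j)" using IH1 le_sum_Icc[of 1 n "cyclen n"] False by simp
      moreover have "Suc n + 1 \<le> (n+2)^2" by (simp add: power2_eq_square)
      ultimately have "Suc n + 1 \<le> (n+2)^2 * (\<Sum>j=1..n. cyclen n j)"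
        by (metis le_trans mult_le_mono mult_1_right)
      thus ?thesis using 1 False P_top[of n] by (simp add: cyclen_Suc)
    next
      case 2
      have "n + 1 \<le> cyclen n k" using Suc.IH[of k] 2 by simp
      thus ?thesis using 2 by (simp add: cyclen_Suc P_mid tail_Cons length_cyc_eq)
    next
      case 3
      obtain L where "spiral n = L @ cyc (cyclen n) 1" using spiral_last by blast
      thus ?thesis using 3 IH1 False P_1[of n] by (simp add: cyclen_Suc length_cyc_eq)
    qed
  qed
qed

lemma cyclen_ge_2: "1 \<le> k \<Longrightarrow> k \<le> n \<Longrightarrow> 2 \<le> cyclen n k"
  using cyclen_ge_Suc[of k n] by linarith

lemma length_cyc_cyclen: "1 \<le> k \<Longrightarrow> k \<le> n \<Longrightarrow> length (cyc (cyclen n) k) = cyclen n k"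
  using cyclen_ge_2[of k n] by (simp add: length_cyc)

lemma length_tail_ge: "1 \<le> i \<Longrightarrow> i \<le> n \<Longrightarrow> 2 * cyclen n n \<le> length (tail n i)"
proof -
  assume "1 \<le> i" "i \<le> n"
  hence "[i..<n+1] = [i..<n] @ [n]" by (simp add: upt_Suc_append)
  thus ?thesis using \<open>1 \<le> i\<close> \<open>i \<le> n\<close> by (simp add: tail_def length_cyc_cyclen)
qed

definition closed_walk :: "nat \<Rightarrow> vert list \<Rightarrow> bool" where
  "closed_walk n l \<longleftrightarrow> (\<forall>j < length l. (l!j, (l @ [centre]) ! Suc j) \<in> E n) \<and> (l \<noteq> [] \<longrightarrow> hd l = centre)"

lemma closed_walk_Nil[simp]: "closed_walk n []"
  by (simp add: closed_walk_def)

lemma centre_loop_E: "(centre, centre) \<in> E n"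
  by (simp add: E_def)

lemma closed_walk_centre: "closed_walk n [centre]"
  by (simp add: closed_walk_def centre_loop_E)

lemma closed_walk_append: assumes a: "closed_walk n a" and b: "closed_walk n b"
  shows "closed_walk n (a @ b)"
proof -
  have hb: "(b @ [centre]) ! 0 = centre" using b by (cases b) (auto simp add: closed_walk_def)
  have "((a@b)!j, ((a@b) @ [centre]) ! Suc j) \<in> E n" if j: "j < length (a@b)" for j
  proof (cases "j < length a")
    case True
    have "(a!j, (a @ [centre]) ! Suc j) \<in> E n" using a True by (simp add: closed_walk_def)
    moreover have "((a@b) @ [centre]) ! Suc j = (a @ [centre]) ! Suc j" if "Suc j < length a"
      using that by (simp add: nth_append)
    moreover have "((a@b) @ [centre]) ! Suc j = (b @ [centre]) ! 0"
      and "(a @ [centre]) ! Suc j = centre" if "Suc j = length a"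
      using that by (simp_all add: nth_append)
    ultimately show ?thesis using True hb by (cases "Suc j < length a") (auto simp add: nth_append)
  next
    case False
    then obtain i where i: "j = length a + i" by (metis le_Suc_ex not_less)
    have "(b!i, (b @ [centre]) ! Suc i) \<in> E n" using b j i by (simp add: closed_walk_def)
    thus ?thesis using i by (simp add: nth_append)
  qed
  moreover have "a @ b \<noteq> [] \<longrightarrow> hd (a @ b) = centre"
    using a b by (cases a) (auto simp add: closed_walk_def)
  ultimately show ?thesis by (simp add: closed_walk_def)
qed

lemma closed_walk_Cons_centre: "closed_walk n l \<Longrightarrow> closed_walk n (centre # l)"
  using closed_walk_append[OF closed_walk_centre] by simp

lemma closed_walk_concat: "(\<And>l. l \<in> set ls \<Longrightarrow> closed_walk n l) \<Longrightarrow> closed_walk n (concat ls)"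
  by (induction ls) (auto intro: closed_walk_append)

lemma closed_walk_rep: "closed_walk n c \<Longrightarrow> closed_walk n (rep a c)"
  unfolding rep_def by (rule closed_walk_concat) auto

lemma cv_edge_E: "1 \<le> k \<Longrightarrow> k \<le> n \<Longrightarrow> j < cyclen n k \<Longrightarrow> (cv n k j, cv n k (Suc j)) \<in> E n"
  unfolding E_def by blast

lemma nth_cyc: "j < length (cyc (cyclen n) k) \<Longrightarrow> cyclen n k \<ge> 1 \<Longrightarrow> cyc (cyclen n) k ! j = cv n k j"
  by (cases j) (auto simp add: cyc_def cv_def centre_def nth_Cons' length_cyc)

lemma closed_walk_cyc: assumes k: "1 \<le> k" "k \<le> n" shows "closed_walk n (cyc (cyclen n) k)"
proof -
  have L: "cyclen n k \<ge> 2" and len: "length (cyc (cyclen n) k) = cyclen n k"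
    using cyclen_ge_2 length_cyc_cyclen k by auto
  have "(cyc (cyclen n) k ! j, (cyc (cyclen n) k @ [centre]) ! Suc j) \<in> E n" if j: "j < cyclen n k" for j
  proof -
    have a: "cyc (cyclen n) k ! j = cv n k j" using j len L by (simp add: nth_cyc)
    have b: "(cyc (cyclen n) k @ [centre]) ! Suc j = cv n k (Suc j)"
      using j len L by (cases "Suc j < cyclen n k") (auto simp add: nth_append nth_cyc cv_def)
    show ?thesis unfolding a b using cv_edge_E k j by simp
  qed
  moreover have "hd (cyc (cyclen n) k) = centre" by (simp add: cyc_def)
  ultimately show ?thesis using len by (simp add: closed_walk_def)
qed

lemma closed_walk_tail: "1 \<le> i \<Longrightarrow> closed_walk n (tail n i)"
  unfolding tail_def
  by (rule closed_walk_concat) (auto intro!: closed_walk_rep closed_walk_cyc)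

lemma closed_walk_P: "closed_walk n (P n i)"
proof (cases rule: P_cases[where n=n and i=i])
  case zero thus ?thesis by (simp add: P_0 closed_walk_rep closed_walk_centre)
next
  case top thus ?thesis by (simp add: P_top closed_walk_rep closed_walk_centre)
next
  case mid thus ?thesis
    by (simp add: P_mid closed_walk_Cons_centre closed_walk_append closed_walk_tail closed_walk_centre)
next
  case one
  have "closed_walk n (spiral n)"
    unfolding spiral_def using one
    by (intro closed_walk_concat) (auto intro!: closed_walk_append closed_walk_rep closed_walk_cyc closed_walk_centre)
  thus ?thesis using one P_1[of n]
    by (simp add: closed_walk_Cons_centre closed_walk_append closed_walk_tail closed_walk_centre)
qed simp

lemma set_P: assumes "v \<in> set (P n i)"
  shows "v = centre \<or> (1 \<le> fst v \<and> fst v \<le> n \<and> 1 \<le> snd v \<and> snd v < cyclen n (fst v) \<and> (2 \<le> i \<longrightarrow> i \<le> fst v))"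
  using assms
proof (cases rule: P_cases[where n=n and i=i])
  case zero thus ?thesis using assms by (auto simp add: P_0 set_rep split: if_splits)
next
  case top thus ?thesis using assms by (auto simp add: P_top set_rep split: if_splits)
next
  case mid thus ?thesis using assms by (auto simp add: P_mid tail_def set_rep set_cyc)
next
  case one thus ?thesis using assms P_1[of n]
    by (auto simp add: tail_def spiral_def set_rep set_cyc split: if_splits)
qed simp

lemma last_P: assumes "P n i \<noteq> []" shows "last (P n i) = centre"
proof (cases rule: P_cases[where n=n and i=i])
  case zero thus ?thesis using assms by (auto simp add: P_0 rep_def numeral_eq_Suc)
next
  case top
  have "rep a [centre] \<noteq> [] \<longrightarrow> last (rep a [centre]) = centre" for a
    by (induction a) (auto simp add: rep_Suc)
  thus ?thesis using assms top by (simp add: P_top)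
qed (use assms P_1[of n] in \<open>simp_all add: P_mid\<close>)

lemma nth_0_P: "P n i \<noteq> [] \<Longrightarrow> P n i ! 0 = centre"
  using closed_walk_P[of n i] by (simp add: closed_walk_def hd_conv_nth)

lemma E_cases: "(u,v) \<in> E n \<Longrightarrow> (u = centre \<and> v = centre) \<or>
   (\<exists>i j. 1 \<le> i \<and> i \<le> n \<and> j < cyclen n i \<and> u = cv n i j \<and> v = cv n i (Suc j))"
  by (auto simp add: E_def)

lemma E_succ_inner: "(u,v) \<in> E n \<Longrightarrow> u = (p,j) \<Longrightarrow> 1 \<le> j \<Longrightarrow> Suc j < cyclen n p \<Longrightarrow> v = (p, Suc j)"
  by (drule E_cases) (auto simp add: centre_def cv_def split: if_splits)

lemma E_succ_last: "(u,v) \<in> E n \<Longrightarrow> u = (p,j) \<Longrightarrow> 1 \<le> j \<Longrightarrow> Suc j = cyclen n p \<Longrightarrow> v = centre"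
  by (drule E_cases) (auto simp add: centre_def cv_def split: if_splits)

lemma E_pred: "(u,v) \<in> E n \<Longrightarrow> v = (p,j) \<Longrightarrow> 1 \<le> j \<Longrightarrow> u = (if j = 1 then centre else (p, j - 1))"
  by (drule E_cases) (auto simp add: centre_def cv_def split: if_splits)

lemma mem_V_iff: "v \<in> V n \<longleftrightarrow> v = centre \<or> (1 \<le> fst v \<and> fst v \<le> n \<and> 1 \<le> snd v \<and> snd v < cyclen n (fst v))"
  by (cases v) (auto simp add: V_def)

lemma mem_V_if_mem_P: "v \<in> set (P n i) \<Longrightarrow> v \<in> V n"
  using set_P[of v n i] by (auto simp add: mem_V_iff)

lemma phi_centre[simp]: "phi n centre = centre" by (simp add: phi_def)

lemma phi_pair: "1 \<le> k \<Longrightarrow> phi n (k, j) = P n k ! j"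
  by (simp add: phi_def centre_def)

lemma phi_mem_V: assumes "v \<in> V (Suc n)" shows "phi n v \<in> V n"
proof (cases "v = centre")
  case True thus ?thesis by (simp add: V_def)
next
  case False
  hence "1 \<le> fst v" "snd v < length (P n (fst v))" using assms by (auto simp add: mem_V_iff cyclen_Suc)
  hence "P n (fst v) ! snd v \<in> set (P n (fst v))" by simp
  thus ?thesis using False by (simp add: phi_def mem_V_if_mem_P)
qed

lemma phi_cv: assumes "1 \<le> k" "j \<le> cyclen (Suc n) k"
  shows "phi n (cv (Suc n) k j) = (P n k @ [centre]) ! j"
proof -
  have len: "length (P n k) = cyclen (Suc n) k" by (simp add: cyclen_Suc)
  show ?thesis
  proof (cases "j = 0")
    case True
    show ?thesis using True nth_0_P[of n k] by (cases "P n k = []") (auto simp add: cv_def nth_append)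
  next
    case False
    show ?thesis
    proof (cases "j < cyclen (Suc n) k")
      case True
      thus ?thesis using False assms len by (simp add: cv_def phi_pair nth_append)
    next
      case False2: False
      hence "j = cyclen (Suc n) k" using assms by simp
      thus ?thesis using len by (simp add: cv_def nth_append)
    qed
  qed
qed

lemma phi_edge: assumes "(u,v) \<in> E (Suc n)" shows "(phi n u, phi n v) \<in> E n"
  using E_cases[OF assms]
proof
  assume "u = centre \<and> v = centre" thus ?thesis by (simp add: centre_loop_E)
next
  assume "\<exists>i j. 1 \<le> i \<and> i \<le> Suc n \<and> j < cyclen (Suc n) i \<and> u = cv (Suc n) i j \<and> v = cv (Suc n) i (Suc j)"
  then obtain k j where k: "1 \<le> k" "k \<le> Suc n" "j < cyclen (Suc n) k" "u = cv (Suc n) k j" "v = cv (Suc n) k (Suc j)"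
    by blast
  have "phi n u = (P n k @ [centre]) ! j" using k phi_cv by simp
  moreover have "phi n v = (P n k @ [centre]) ! Suc j" using k phi_cv by simp
  moreover have "j < length (P n k)" using k by (simp add: cyclen_Suc)
  ultimately show ?thesis using closed_walk_P[of n k] by (simp add: closed_walk_def nth_append)
qed

lemma P_run: assumes q: "q < length (P n i)" and pq: "P n i ! q = (k, j)" and j: "1 \<le> j"
  shows "j + s < cyclen n k \<Longrightarrow> q + s < length (P n i) \<and> P n i ! (q + s) = (k, j + s)"
proof (induction s)
  case 0 thus ?case using q pq by simp
next
  case (Suc s)
  hence IH: "q + s < length (P n i)" "P n i ! (q + s) = (k, j + s)" by auto
  have e: "(P n i ! (q+s), (P n i @ [centre]) ! Suc (q+s)) \<in> E n" using closed_walk_P[of n i] IH(1) unfolding closed_walk_def by blast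
  have nx: "(P n i @ [centre]) ! Suc (q+s) = (k, Suc (j + s))"
    using E_succ_inner[OF e IH(2)] j Suc.prems by simp
  have "Suc (q + s) \<noteq> length (P n i)"
  proof
    assume "Suc (q + s) = length (P n i)"
    hence "(P n i @ [centre]) ! Suc (q+s) = centre" by (simp add: nth_append)
    thus False using nx by (simp add: centre_def)
  qed
  hence lt: "Suc (q + s) < length (P n i)" using IH(1) by simp
  thus ?case using nx by (simp add: nth_append)
qed

lemma P_run_end: assumes q: "q < length (P n i)" and pq: "P n i ! q = (k, j)" and j: "1 \<le> j"
  and jl: "j < cyclen n k"
  shows "q + (cyclen n k - j) < length (P n i) \<and> P n i ! (q + (cyclen n k - j)) = centre"
proof -
  define s where "s = cyclen n k - j - 1"
  have c: "q + s < length (P n i) \<and> P n i ! (q + s) = (k, j + s)"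
    using P_run[OF q pq j, of s] jl by (simp add: s_def)
  have e: "(P n i ! (q+s), (P n i @ [centre]) ! Suc (q+s)) \<in> E n" using closed_walk_P[of n i] c unfolding closed_walk_def by blast
  have nx: "(P n i @ [centre]) ! Suc (q+s) = centre"
    using E_succ_last[OF e] c j jl by (simp add: s_def)
  have "Suc (q + s) \<noteq> length (P n i)"
  proof
    assume a: "Suc (q + s) = length (P n i)"
    have ne: "P n i \<noteq> []" using c by auto
    have "last (P n i) = P n i ! (length (P n i) - 1)" by (rule last_conv_nth[OF ne])
    moreover have "length (P n i) - 1 = q + s" using a by simp
    ultimately have "last (P n i) = (k, j + s)" using c by simp
    moreover have "last (P n i) = centre" using last_P[OF ne] .
    ultimately show False using j by (simp add: centre_def)
  qed
  hence lt: "Suc (q + s) < length (P n i)" using c by simp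
  have eq: "Suc (q + s) = q + (cyclen n k - j)" using jl by (simp add: s_def)
  have "P n i ! Suc (q+s) = centre" using nx lt by (simp add: nth_append)
  thus ?thesis using lt unfolding eq by simp
qed

fun proj :: "nat \<Rightarrow> nat \<Rightarrow> vert \<Rightarrow> vert" where
  "proj 0 m v = v"
| "proj (Suc k) m v = proj k m (phi (m + k) v)"

lemma proj_Suc_outer: "proj (Suc k) m v = phi m (proj k (Suc m) v)"
proof (induction k arbitrary: v)
  case 0 thus ?case by simp
next
  case (Suc k)
  have "proj (Suc (Suc k)) m v = proj (Suc k) m (phi (m + Suc k) v)" by simp
  also have "\<dots> = phi m (proj k (Suc m) (phi (m + Suc k) v))" by (rule Suc.IH)
  also have "proj k (Suc m) (phi (m + Suc k) v) = proj (Suc k) (Suc m) v" by simp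
  finally show ?case .
qed

lemma proj_centre[simp]: "proj k m centre = centre"
  by (induction k) auto

lemma proj_mem_V: "v \<in> V (m + k) \<Longrightarrow> proj k m v \<in> V m"
proof (induction k arbitrary: v)
  case 0 thus ?case by simp
next
  case (Suc k)
  have "phi (m + k) v \<in> V (m + k)" using phi_mem_V[of v "m+k"] Suc.prems by simp
  thus ?case using Suc.IH by simp
qed

lemma proj_X: "z \<in> X \<Longrightarrow> proj k m (z (m + k)) = z m"
proof (induction k arbitrary: m)
  case 0 thus ?case by simp
next
  case (Suc k)
  have "proj (Suc k) m (z (m + Suc k)) = phi m (proj k (Suc m) (z (Suc m + k)))"
    using proj_Suc_outer[of k m "z (m + Suc k)"] by simp
  also have "proj k (Suc m) (z (Suc m + k)) = z (Suc m)" using Suc by blast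
  also have "phi m (z (Suc m)) = z m" using Suc.prems by (simp add: X_def)
  finally show ?case .
qed

lemma proj_X_diff: "z \<in> X \<Longrightarrow> m \<le> l \<Longrightarrow> proj (l - m) m (z l) = z m"
  using proj_X[of z "l - m" m] by simp

lemma proj_above: "v \<in> V (m + k) \<Longrightarrow> 1 \<le> m \<Longrightarrow> v = centre \<or> fst v > m \<Longrightarrow> proj k m v = centre"
proof (induction k arbitrary: v)
  case 0 thus ?case by (auto simp add: mem_V_iff)
next
  case (Suc k)
  show ?case
  proof (cases "v = centre")
    case True thus ?thesis by simp
  next
    case False
    hence fv: "fst v > m" "1 \<le> fst v" "snd v < cyclen (Suc (m + k)) (fst v)" using Suc.prems by (auto simp add: mem_V_iff)
    have w: "phi (m + k) v = P (m + k) (fst v) ! snd v" using False by (simp add: phi_def)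
    have mem: "P (m + k) (fst v) ! snd v \<in> set (P (m + k) (fst v))" using fv(3) by (simp add: cyclen_Suc)
    have "phi (m + k) v \<in> V (m + k)" using w mem mem_V_if_mem_P by simp
    moreover have "phi (m + k) v = centre \<or> fst (phi (m + k) v) > m"
      using set_P[OF mem] fv(1) Suc.prems(2) w by auto
    ultimately show ?thesis using Suc.IH Suc.prems(2) by simp
  qed
qed

lemma proj_above_diff: "v \<in> V l \<Longrightarrow> m \<le> l \<Longrightarrow> 1 \<le> m \<Longrightarrow> v = centre \<or> fst v > m \<Longrightarrow> proj (l - m) m v = centre"
  using proj_above[of v m "l - m"] by simp

lemma P_head: assumes "1 \<le> p" "p \<le> n" shows "\<exists>rest. P n p = centre # cyc (cyclen n) p @ rest"
proof (cases "p = 1")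
  case True
  have "[1..<spiral_count n + 1] = 1 # [Suc 1..<spiral_count n + 1]"
    by (rule upt_conv_Cons) (simp add: spiral_count_def)
  thus ?thesis using True assms P_1[of n] by (simp add: spiral_def rep_2 rep_Suc)
next
  case False
  thus ?thesis using assms by (simp add: P_mid tail_Cons)
qed

lemma nth_P_head: assumes "1 \<le> p" "p \<le> n" "1 \<le> s" "s \<le> cyclen n p"
  shows "P n p ! s = (if s = 1 then centre else (p, s - 1))"
proof -
  obtain rest where r: "P n p = centre # cyc (cyclen n) p @ rest" using P_head assms by blast
  have L: "cyclen n p \<ge> 2" using cyclen_ge_2 assms by simp
  have len: "length (cyc (cyclen n) p) = cyclen n p" using L by (simp add: length_cyc)
  have s1: "s - 1 < length (cyc (cyclen n) p)" using assms len by linarith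
  have "P n p ! s = (cyc (cyclen n) p @ rest) ! (s - 1)" using r assms by (simp add: nth_Cons')
  also have "\<dots> = cyc (cyclen n) p ! (s - 1)" using s1 by (simp add: nth_append)
  also have "\<dots> = cv n p (s - 1)" using assms len L by (simp add: nth_cyc)
  finally show ?thesis using assms s1 len by (auto simp add: cv_def)
qed

text \<open>Each P n p with p \<le> n begins with the centre followed by c_{n,p}, so phi moves a vertex
  near the start of c_{n+1,p} one step back along c_{n,p}.\<close>

lemma proj_cyc: assumes "1 \<le> p" "p \<le> m" "1 \<le> s" "s \<le> k + 1"
  shows "proj k m (p, s) = (if s = k + 1 then (p, 1) else centre)"
  using assms
proof (induction k arbitrary: s)
  case 0 thus ?case by simp
next
  case (Suc k)
  have L: "cyclen (m + k) p \<ge> m + k + 1" using cyclen_ge_Suc Suc.prems by simp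
  have "proj (Suc k) m (p, s) = proj k m (phi (m + k) (p, s))" by simp
  also have "phi (m + k) (p, s) = P (m + k) p ! s" using Suc.prems by (simp add: phi_pair)
  also have "\<dots> = (if s = 1 then centre else (p, s - 1))"
    using Suc.prems L by (intro nth_P_head) auto
  finally show ?case using Suc.IH[of "s - 1"] Suc.prems by auto
qed

lemma X_mem_V: "x \<in> X \<Longrightarrow> x n \<in> V n"
  by (simp add: X_def)

lemma X_phi: "x \<in> X \<Longrightarrow> phi n (x (Suc n)) = x n"
  by (simp add: X_def)

lemma X_eq_if_eventually_eq:
  assumes "x \<in> X" "y \<in> X" and eq: "\<And>n. N \<le> n \<Longrightarrow> x n = y n"
  shows "x = y"
proof
  fix m
  have "x m = proj N m (x (m + N))" using proj_X[OF assms(1)] by simp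
  also have "\<dots> = proj N m (y (m + N))" using eq by simp
  also have "\<dots> = y m" using proj_X[OF assms(2)] by simp
  finally show "x m = y m" .
qed

lemma X_extend:
  assumes V: "\<And>n. N \<le> n \<Longrightarrow> y n \<in> V n" and compat: "\<And>n. N \<le> n \<Longrightarrow> phi n (y (Suc n)) = y n"
  shows "(\<lambda>n. if N \<le> n then y n else proj (N - n) n (y N)) \<in> X" (is "?y \<in> X")
proof -
  have "?y n \<in> V n" for n
    using V proj_mem_V[of "y N" n "N - n"] by (cases "N \<le> n") auto
  moreover have "phi n (?y (Suc n)) = ?y n" for n
  proof -
    consider "N \<le> n" | "Suc n = N" | "Suc n < N" by linarith
    thus ?thesis
    proof cases
      case 3
      hence "N - n = Suc (N - Suc n)" by simp
      thus ?thesis using 3 by (simp add: proj_Suc_outer del: proj.simps(2))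
    qed (auto simp add: compat)
  qed
  ultimately show ?thesis by (simp add: X_def)
qed

lemma X_edge_downward:
  assumes "x \<in> X" "y \<in> X" and edge: "\<And>n. N \<le> n \<Longrightarrow> (x n, y n) \<in> E n"
  shows "(x n, y n) \<in> E n"
proof (induction "N - n" arbitrary: n)
  case 0 thus ?case using edge by simp
next
  case (Suc d)
  hence "(x (Suc n), y (Suc n)) \<in> E (Suc n)" by simp
  hence "(phi n (x (Suc n)), phi n (y (Suc n))) \<in> E n" by (rule phi_edge)
  thus ?case using X_phi assms by metis
qed

definition remaining :: "nat \<Rightarrow> vert \<Rightarrow> nat" where
  "remaining n v = cyclen n (fst v) - snd v"

definition escaping :: "(nat \<Rightarrow> vert) \<Rightarrow> bool" where
  "escaping x \<longleftrightarrow> x \<in> X \<and> (\<forall>K. \<exists>N. \<forall>n \<ge> N. x n \<noteq> centre \<and> K < remaining n (x n))"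

lemma escaping_remaining_gt:
  "escaping x \<Longrightarrow> \<exists>N. \<forall>n \<ge> N. x n \<noteq> centre \<and> K < remaining n (x n)"
  by (simp add: escaping_def)

lemma inner_vertex_if_remaining_gt:
  assumes "x \<in> X" "x n \<noteq> centre" "1 < remaining n (x n)"
  shows "x n = (fst (x n), snd (x n)) \<and> 1 \<le> fst (x n) \<and> fst (x n) \<le> n \<and> 1 \<le> snd (x n)
    \<and> Suc (snd (x n)) < cyclen n (fst (x n))"
  using X_mem_V[OF assms(1), of n] assms(2,3) by (auto simp add: mem_V_iff remaining_def)

lemma E_succ_if_remaining_gt:
  assumes "x \<in> X" "x n \<noteq> centre" "1 < remaining n (x n)" "(x n, v) \<in> E n"
  shows "v = (fst (x n), Suc (snd (x n)))"
  using inner_vertex_if_remaining_gt[OF assms(1-3)] E_succ_inner[OF assms(4) prod.collapse[symmetric]]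
  by simp

lemma phi_advance:
  assumes "x \<in> X" and xn: "x n = (i, j)" "1 \<le> j" "Suc j < cyclen n i"
    and xS: "x (Suc n) = (p, q)" "1 \<le> p"
  shows "phi n (p, Suc q) = (i, Suc j)"
proof -
  have q: "q < length (P n p)"
    using X_mem_V[OF assms(1), of "Suc n"] xS by (auto simp add: mem_V_iff cyclen_Suc centre_def)
  have pq: "P n p ! q = (i, j)" using X_phi[OF assms(1), of n] xn xS by (simp add: phi_pair)
  have "P n p ! (q + 1) = (i, j + 1)" using P_run[OF q pq xn(2), of 1] xn by simp
  thus ?thesis using xS by (simp add: phi_pair)
qed

lemma T_eq:
  assumes x: "escaping x" and y: "y \<in> X" "\<And>n. (x n, y n) \<in> E n"
  shows "T x = y"
  unfolding T_def
proof (rule the_equality)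
  fix y' assume y': "y' \<in> X \<and> (\<forall>n. (x n, y' n) \<in> E n)"
  have xX: "x \<in> X" using x by (simp add: escaping_def)
  obtain N where N: "\<And>n. N \<le> n \<Longrightarrow> x n \<noteq> centre" "\<And>n. N \<le> n \<Longrightarrow> 1 < remaining n (x n)"
    using escaping_remaining_gt[OF x] by blast
  have "y' n = y n" if "N \<le> n" for n
    using E_succ_if_remaining_gt[OF xX N(1,2)[OF that]] y(2) y' by metis
  thus "y' = y" using X_eq_if_eventually_eq y y' by blast
qed (use y in blast)

lemma T_step:
  assumes x: "escaping x"
  shows "T x \<in> X" "(x n, T x n) \<in> E n"
proof -
  have xX: "x \<in> X" using x by (simp add: escaping_def)
  obtain N where N: "\<And>n. N \<le> n \<Longrightarrow> x n \<noteq> centre" "\<And>n. N \<le> n \<Longrightarrow> 1 < remaining n (x n)"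
    using escaping_remaining_gt[OF x] by blast
  define adv where "adv n = (fst (x n), Suc (snd (x n)))" for n
  have inner: "x n = (fst (x n), snd (x n)) \<and> 1 \<le> fst (x n) \<and> fst (x n) \<le> n \<and> 1 \<le> snd (x n)
      \<and> Suc (snd (x n)) < cyclen n (fst (x n))" if "N \<le> n" for n
    using inner_vertex_if_remaining_gt[OF xX N(1,2)[OF that]] .
  have "adv n \<in> V n" if "N \<le> n" for n
    using inner[OF that] by (auto simp add: adv_def mem_V_iff)
  moreover have "phi n (adv (Suc n)) = adv n" if "N \<le> n" for n
    using phi_advance[OF xX] inner[of n] inner[of "Suc n"] that by (simp add: adv_def)
  ultimately have yX: "(\<lambda>n. if N \<le> n then adv n else proj (N - n) n (adv N)) \<in> X" (is "?y \<in> X")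
    by (rule X_extend)
  have "(x n, ?y n) \<in> E n" if "N \<le> n" for n
    using inner[OF that] cv_edge_E[of "fst (x n)" n "snd (x n)"] that
    by (simp add: adv_def cv_def)
  hence edge: "(x n, ?y n) \<in> E n" for n
    using X_edge_downward[OF xX yX] by blast
  show "T x \<in> X" "(x n, T x n) \<in> E n" using T_eq[OF x yX edge] yX edge by simp_all
qed

lemma T_advance:
  assumes "escaping x" "x n \<noteq> centre" "1 < remaining n (x n)"
  shows "T x n = (fst (x n), Suc (snd (x n)))"
  using E_succ_if_remaining_gt[of x n, OF _ assms(2,3) T_step(2)[OF assms(1)]] assms(1)
  by (simp add: escaping_def)

lemma escaping_T: assumes "escaping x" shows "escaping (T x)"
  unfolding escaping_def
proof (intro conjI allI)
  show "T x \<in> X" using T_step[OF assms] by simp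
  fix K
  obtain N where N: "\<And>n. N \<le> n \<Longrightarrow> x n \<noteq> centre \<and> Suc K < remaining n (x n)"
    using escaping_remaining_gt[OF assms] by blast
  have "T x n \<noteq> centre \<and> K < remaining n (T x n)" if "N \<le> n" for n
    using N[OF that] T_advance[OF assms, of n] by (auto simp add: remaining_def centre_def)
  thus "\<exists>N. \<forall>n\<ge>N. T x n \<noteq> centre \<and> K < remaining n (T x n)" by blast
qed

lemma escaping_iter_T: "escaping x \<Longrightarrow> escaping ((T^^t) x)"
  by (induction t) (auto intro: escaping_T)

lemma iter_T_mem_X: "escaping x \<Longrightarrow> (T^^t) x \<in> X"
  using escaping_iter_T escaping_def by blast

lemma iter_T_mem_V: "escaping x \<Longrightarrow> (T^^t) x l \<in> V l"
  using iter_T_mem_X X_mem_V by blast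

lemma iter_T_edge: "escaping x \<Longrightarrow> ((T^^t) x n, (T^^Suc t) x n) \<in> E n"
  using T_step[OF escaping_iter_T[of x t]] by simp

lemma iter_T_advance:
  assumes x: "escaping x" and "x n \<noteq> centre"
  shows "t < remaining n (x n) \<Longrightarrow> (T^^t) x n = (fst (x n), snd (x n) + t)"
proof (induction t)
  case (Suc t)
  hence xt: "(T^^t) x n = (fst (x n), snd (x n) + t)" by simp
  moreover have "(T^^t) x n \<noteq> centre"
    using xt assms X_mem_V[of x n] by (auto simp add: escaping_def mem_V_iff centre_def)
  ultimately show ?case
    using T_advance[OF escaping_iter_T[OF x], where n=n] Suc.prems by (simp add: remaining_def)
qed simp

lemma deg_attained: "\<exists>n. deg x = degv (x n)"
proof -
  have "range (\<lambda>n. degv (x n)) \<noteq> {}" by simp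
  hence "Inf (range (\<lambda>n. degv (x n))) \<in> range (\<lambda>n. degv (x n))"
    unfolding Inf_enat_def using LeastI[of "\<lambda>z. z \<in> range (\<lambda>n. degv (x n))" "degv (x 0)"] by simp
  thus ?thesis unfolding deg_def by auto
qed

lemma deg_le_degv: "deg x \<le> degv (x n)"
  unfolding deg_def by (rule INF_lower) simp

lemma fst_Suc_le: assumes xX: "x \<in> X" and ne: "x n \<noteq> centre"
  shows "x (Suc n) \<noteq> centre \<and> fst (x n) \<ge> fst (x (Suc n))"
proof -
  have ne2: "x (Suc n) \<noteq> centre" using ne X_phi[OF xX, of n] by auto
  obtain p q where pq: "x (Suc n) = (p, q)" by (cases "x (Suc n)")
  have V: "1 \<le> p" "q < cyclen (Suc n) p" using X_mem_V[OF xX, of "Suc n"] ne2 pq by (auto simp add: mem_V_iff)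
  have "x n = P n p ! q" using X_phi[OF xX, of n] pq V by (simp add: phi_pair)
  moreover have "P n p ! q \<in> set (P n p)" using V by (simp add: cyclen_Suc)
  ultimately have "x n = centre \<or> (1 \<le> fst (x n) \<and> (2 \<le> p \<longrightarrow> p \<le> fst (x n)))"
    using set_P[of "x n" n p] by auto
  hence "p \<le> fst (x n)" using ne V by (cases "p \<ge> 2") auto
  thus ?thesis using ne2 pq by simp
qed

lemma deg_eventually_on_cycle:
  assumes xX: "x \<in> X" and dx: "deg x = enat i"
  shows "\<exists>N. \<forall>n \<ge> N. x n \<noteq> centre \<and> fst (x n) = i"
proof -
  obtain n0 where n0: "deg x = degv (x n0)" using deg_attained by blast
  have ne0: "x n0 \<noteq> centre" using n0 dx by (auto simp add: degv_def)
  have f0: "fst (x n0) = i" using n0 dx ne0 by (simp add: degv_def)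
  have up: "x n \<noteq> centre \<and> fst (x n) \<le> i" if "n \<ge> n0" for n
    using that
  proof (induction n rule: dec_induct)
    case base thus ?case using ne0 f0 by simp
  next
    case (step n) thus ?case using fst_Suc_le[OF xX, of n] by auto
  qed
  have lo: "i \<le> fst (x n)" if "x n \<noteq> centre" for n
    using deg_le_degv[of x n] dx that by (simp add: degv_def)
  show ?thesis using up lo by (intro exI[of _ n0]) (auto intro: antisym)
qed

lemma remaining_Suc_gt:
  assumes xX: "x \<in> X" and ne: "x n \<noteq> centre" and same: "fst (x (Suc n)) = fst (x n)"
  shows "remaining n (x n) < remaining (Suc n) (x (Suc n))"
proof -
  obtain i a where ia: "x n = (i, a)" by (cases "x n")
  have ne2: "x (Suc n) \<noteq> centre" using fst_Suc_le[OF xX ne] by simp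
  obtain b where b: "x (Suc n) = (i, b)" using same ia by (cases "x (Suc n)") auto
  have Va: "1 \<le> i" "1 \<le> a" "a < cyclen n i" using X_mem_V[OF xX, of n] ne ia by (auto simp add: mem_V_iff)
  have Vb: "b < cyclen (Suc n) i" using X_mem_V[OF xX, of "Suc n"] ne2 b by (auto simp add: mem_V_iff)
  have "P n i ! b = (i, a)" using X_phi[OF xX, of n] b ia Va by (simp add: phi_pair)
  hence "b + (cyclen n i - a) < length (P n i)"
    using P_run_end[of b n i i a] Vb Va by (simp add: cyclen_Suc)
  thus ?thesis using ia b by (simp add: remaining_def cyclen_Suc)
qed

lemma deg_escaping:
  assumes xX: "x \<in> X" and dx: "deg x = enat i"
  shows "escaping x"
proof -
  obtain N where N: "\<And>n. n \<ge> N \<Longrightarrow> x n \<noteq> centre \<and> fst (x n) = i" using deg_eventually_on_cycle[OF assms] by blast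
  have gr: "n - N \<le> remaining n (x n)" if "n \<ge> N" for n
    using that
  proof (induction n rule: dec_induct)
    case base thus ?case by simp
  next
    case (step n)
    have "remaining n (x n) < remaining (Suc n) (x (Suc n))"
      using remaining_Suc_gt[OF xX] N[of n] N[of "Suc n"] step.hyps by simp
    thus ?case using step.IH step.hyps by simp
  qed
  show ?thesis unfolding escaping_def
  proof (intro conjI allI)
    show "x \<in> X" by (rule xX)
    fix K
    have "\<forall>n \<ge> N + Suc K. x n \<noteq> centre \<and> K < remaining n (x n)"
    proof (intro allI impI)
      fix n assume "N + Suc K \<le> n"
      thus "x n \<noteq> centre \<and> K < remaining n (x n)" using N[of n] gr[of n] by simp
    qed
    thus "\<exists>N. \<forall>n\<ge>N. x n \<noteq> centre \<and> K < remaining n (x n)" by blast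
  qed
qed

lemma iter_T_forward: assumes g: "escaping x" and a: "(T^^t) x l = (p, j)" and j: "1 \<le> j"
  shows "j + s < cyclen l p \<Longrightarrow> (T^^(t+s)) x l = (p, j+s)"
proof (induction s)
  case 0 thus ?case using a by simp
next
  case (Suc s)
  hence IH: "(T^^(t+s)) x l = (p, j+s)" by simp
  have "((T^^(t+s)) x l, (T^^Suc (t+s)) x l) \<in> E l" by (rule iter_T_edge[OF g])
  hence "(T^^Suc (t+s)) x l = (p, Suc (j+s))" using E_succ_inner[OF _ IH] j Suc.prems by simp
  thus ?case by simp
qed

lemma iter_T_backward: assumes g: "escaping x" and a: "(T^^u) x l = (p, j)"
  shows "s < j \<Longrightarrow> s \<le> u \<Longrightarrow> (T^^(u - s)) x l = (p, j - s)"
proof (induction s)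
  case 0 thus ?case using a by simp
next
  case (Suc s)
  hence IH: "(T^^(u-s)) x l = (p, j - s)" by simp
  have us: "u - s = Suc (u - Suc s)" using Suc.prems by simp
  have "((T^^(u - Suc s)) x l, (T^^Suc (u - Suc s)) x l) \<in> E l" by (rule iter_T_edge[OF g])
  hence "((T^^(u - Suc s)) x l, (p, j - s)) \<in> E l" using IH us by simp
  hence "(T^^(u - Suc s)) x l = (if j - s = 1 then centre else (p, j - s - 1))"
    using E_pred Suc.prems by simp
  moreover have "j - s \<noteq> 1" using Suc.prems by simp
  ultimately have "(T^^(u - Suc s)) x l = (p, j - s - 1)" by simp
  moreover have "j - s - 1 = j - Suc s" by simp
  ultimately show ?case by simp
qed

lemma iter_T_proj: "escaping x \<Longrightarrow> m \<le> l \<Longrightarrow> (T^^t) x m = proj (l - m) m ((T^^t) x l)"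
  using proj_X_diff[OF iter_T_mem_X] by simp

text \<open>off_low v: the vertex v is not on one of the cycles c_{l,1}, c_{l,2}; such vertices
  project to the centre of G_2.\<close>

definition off_low :: "vert \<Rightarrow> bool" where
  "off_low v \<longleftrightarrow> v = centre \<or> 2 < fst v"

lemma iter_T_level2_at_entry:
  assumes x: "escaping x" and l: "2 \<le> l" and entry: "(T^^Suc t) x l = (p, 1)" and p: "1 \<le> p" "p \<le> 2"
  shows "(T^^(t + (l - 1))) x 2 = (p, 1)"
proof -
  have "l + 1 \<le> cyclen l p" using cyclen_ge_Suc p l by simp
  hence "(T^^(Suc t + (l - 2))) x l = (p, l - 1)"
    using iter_T_forward[OF x entry, of "l - 2"] l by simp
  hence "(T^^(t + (l - 1))) x l = (p, l - 2 + 1)" using l by (simp add: Suc_diff_Suc numeral_2_eq_2)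
  moreover have "proj (l - 2) 2 (p, l - 2 + 1) = (p, 1)" using p by (subst proj_cyc) auto
  ultimately show ?thesis using iter_T_proj[OF x, of 2 l] l by simp
qed

lemma low_cycle_position_from_level2:
  assumes y: "escaping y" and l: "2 \<le> l" and u: "l - 1 \<le> u"
    and before: "off_low ((T^^(u - (l - 1))) y l)" and at2: "(T^^u) y 2 = (p, 1)"
  shows "(T^^u) y l = (p, l - 1)"
proof -
  obtain p' s where ps: "(T^^u) y l = (p', s)" by (cases "(T^^u) y l")
  have proj_ps: "proj (l - 2) 2 (p', s) = (p, 1)"
    using iter_T_proj[OF y, of 2 l u] l ps at2 by simp
  have Vy: "(p', s) \<in> V l" using iter_T_mem_V[OF y] ps by metis
  have "\<not> off_low (p', s)"
  proof
    assume "off_low (p', s)"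
    hence "proj (l - 2) 2 (p', s) = centre" using Vy l by (intro proj_above_diff) (auto simp add: off_low_def)
    thus False using proj_ps by (simp add: centre_def)
  qed
  hence p': "1 \<le> p'" "p' \<le> 2" "1 \<le> s" using Vy by (auto simp add: mem_V_iff off_low_def centre_def)
  have "s \<le> l - 1"
  proof (rule ccontr)
    assume "\<not> s \<le> l - 1"
    hence "(T^^(u - (l - 1))) y l = (p', s - (l - 1))" using iter_T_backward[OF y ps, of "l - 1"] u by simp
    thus False using before p' \<open>\<not> s \<le> l - 1\<close> by (simp add: off_low_def centre_def)
  qed
  hence "proj (l - 2) 2 (p', s) = (if s = l - 1 then (p', 1) else centre)"
    using p' l by (subst proj_cyc) auto
  thus ?thesis using proj_ps ps by (auto simp add: centre_def split: if_splits)
qed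

lemma agree_at_entry:
  assumes x: "escaping x" and y: "escaping y" and l: "2 \<le> l"
    and agree2: "(T^^(t + (l - 1))) x 2 = (T^^(t + (l - 1))) y 2"
    and entry: "(T^^Suc t) x l = (p, 1)" and p: "1 \<le> p" "p \<le> 2"
    and before: "off_low ((T^^t) y l)"
  shows "(T^^Suc t) y l = (p, 1)"
proof -
  have "(T^^(t + (l - 1))) y 2 = (p, 1)"
    using iter_T_level2_at_entry[OF x l entry p] agree2 by simp
  hence "(T^^(t + (l - 1))) y l = (p, l - 1)"
    using low_cycle_position_from_level2[OF y l, of "t + (l - 1)"] before by simp
  from iter_T_backward[OF y this, of "l - 2"] show ?thesis
    using l by (simp add: Suc_diff_Suc numeral_2_eq_2)
qed

lemma agree_or_off_low_Suc:
  assumes x: "escaping x" and y: "escaping y" and l: "2 \<le> l"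
    and agree2: "(T^^(t + (l - 1))) x 2 = (T^^(t + (l - 1))) y 2"
    and now: "(T^^t) x l = (T^^t) y l \<or> (off_low ((T^^t) x l) \<and> off_low ((T^^t) y l))"
    and low: "\<not> off_low ((T^^Suc t) x l)"
  shows "(T^^Suc t) y l = (T^^Suc t) x l"
proof -
  obtain p j where pj: "(T^^Suc t) x l = (p, j)" by (cases "(T^^Suc t) x l")
  have V: "1 \<le> p" "p \<le> 2" "1 \<le> j" "j < cyclen l p"
    using iter_T_mem_V[OF x, of "Suc t" l] low pj by (auto simp add: mem_V_iff off_low_def)
  have prev: "(T^^t) x l = (if j = 1 then centre else (p, j - 1))"
    using E_pred[OF iter_T_edge[OF x] pj V(3)] .
  show ?thesis
  proof (cases "j = 1")
    case True
    hence "off_low ((T^^t) y l)" using now prev by (auto simp add: off_low_def)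
    thus ?thesis using agree_at_entry[OF x y l agree2 _ V(1,2)] pj True by simp
  next
    case False
    hence "(T^^t) y l = (p, j - 1)" using now prev V by (auto simp add: off_low_def centre_def)
    from E_succ_inner[OF iter_T_edge[OF y] this] show ?thesis using pj False V by simp
  qed
qed

lemma agree_or_off_low:
  assumes x: "escaping x" and y: "escaping y" and l: "2 \<le> l"
    and agree2: "\<And>t. T0 \<le> t \<Longrightarrow> (T^^t) x 2 = (T^^t) y 2"
    and start: "(T^^T0) x l = (T^^T0) y l"
  shows "T0 \<le> t \<Longrightarrow> (T^^t) x l = (T^^t) y l \<or> (off_low ((T^^t) x l) \<and> off_low ((T^^t) y l))"
proof (induction t rule: dec_induct)
  case (step t)
  have agree2': "(T^^(t + (l - 1))) x 2 = (T^^(t + (l - 1))) y 2" using agree2 step.hyps(1) by simp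
  have IH': "(T^^t) y l = (T^^t) x l \<or> (off_low ((T^^t) y l) \<and> off_low ((T^^t) x l))"
    using step.IH by auto
  show ?case
    using agree_or_off_low_Suc[OF x y l agree2' step.IH]
      agree_or_off_low_Suc[OF y x l agree2'[symmetric] IH']
    by (cases "off_low ((T^^Suc t) x l)") auto
qed (use start in simp)
lemma tail_positions:
  assumes k: "1 \<le> k" "k \<le> n"
    and l: "l = A @ cyc (cyclen n) k @ cyc (cyclen n) k @ tail n (Suc k) @ [centre]"
  shows "length l = length A + 2 * cyclen n k + length (tail n (Suc k)) + 1"
    and "s < cyclen n k \<Longrightarrow> l ! (length A + s) = cv n k s"
    and "length A \<le> q \<Longrightarrow> q < length l \<Longrightarrow> l ! q = centre \<or> k \<le> fst (l ! q)"
    and "length A + 2 * cyclen n k \<le> q \<Longrightarrow> q < length l \<Longrightarrow> l ! q = centre \<or> Suc k \<le> fst (l ! q)"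
proof -
  have len: "length (cyc (cyclen n) k) = cyclen n k" using length_cyc_cyclen[OF k] .
  show "length l = length A + 2 * cyclen n k + length (tail n (Suc k)) + 1" using l len by simp
  show "l ! (length A + s) = cv n k s" if "s < cyclen n k"
    using that l len cyclen_ge_2[OF k] by (simp add: nth_append nth_cyc)
  show "l ! q = centre \<or> k \<le> fst (l ! q)" if "length A \<le> q" "q < length l"
  proof -
    have "l ! q \<in> set (cyc (cyclen n) k @ cyc (cyclen n) k @ tail n (Suc k) @ [centre])"
      unfolding l by (rule nth_append_mem_right) (use that l in simp_all)
    thus ?thesis using set_tail[of "l ! q" n "Suc k"] by (auto simp add: set_cyc)
  qed
  show "l ! q = centre \<or> Suc k \<le> fst (l ! q)" if "length A + 2 * cyclen n k \<le> q" "q < length l"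
  proof -
    have "l ! q \<in> set (tail n (Suc k) @ [centre])"
      using nth_append_mem_right[of q "A @ cyc (cyclen n) k @ cyc (cyclen n) k" "tail n (Suc k) @ [centre]"]
        that l len by simp
    thus ?thesis using set_tail[of "l ! q" n "Suc k"] by auto
  qed
qed

lemma P_1_positions:
  assumes n: "2 \<le> n"
  shows "length (P n 1) = spiral_len n + 1 + 2 * cyclen n 2 + length (tail n 3) + 1"
    and "s < cyclen n 2 \<Longrightarrow> P n 1 ! (spiral_len n + 1 + s) = cv n 2 s"
    and "spiral_len n + 1 \<le> q \<Longrightarrow> q < length (P n 1) \<Longrightarrow> P n 1 ! q = centre \<or> 2 \<le> fst (P n 1 ! q)"
    and "spiral_len n + 1 + 2 * cyclen n 2 \<le> q \<Longrightarrow> q < length (P n 1) \<Longrightarrow>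
      P n 1 ! q = centre \<or> 3 \<le> fst (P n 1 ! q)"
proof -
  have "P n 1 = (spiral n @ [centre]) @ cyc (cyclen n) 2 @ cyc (cyclen n) 2 @ tail n (Suc 2) @ [centre]"
    using P_1[of n] tail_Cons[of 2 n] n by simp
  note pos = tail_positions[OF _ n this]
  show "length (P n 1) = spiral_len n + 1 + 2 * cyclen n 2 + length (tail n 3) + 1"
    using pos(1) by (simp add: spiral_len_def)
  show "s < cyclen n 2 \<Longrightarrow> P n 1 ! (spiral_len n + 1 + s) = cv n 2 s"
    using pos(2)[of s] by (simp add: spiral_len_def)
  show "spiral_len n + 1 \<le> q \<Longrightarrow> q < length (P n 1) \<Longrightarrow> P n 1 ! q = centre \<or> 2 \<le> fst (P n 1 ! q)"
    using pos(3)[of q] by (simp add: spiral_len_def)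
  show "spiral_len n + 1 + 2 * cyclen n 2 \<le> q \<Longrightarrow> q < length (P n 1) \<Longrightarrow>
      P n 1 ! q = centre \<or> 3 \<le> fst (P n 1 ! q)"
    using pos(4)[of q] by (simp add: spiral_len_def)
qed

lemma P_mid_positions:
  assumes i: "2 \<le> i" "Suc i \<le> n"
  shows "length (P n i) = 1 + 2 * cyclen n i + 2 * cyclen n (Suc i) + length (tail n (i + 2)) + 1"
    and "s < cyclen n (Suc i) \<Longrightarrow> P n i ! (1 + 2 * cyclen n i + s) = cv n (Suc i) s"
    and "1 + 2 * cyclen n i \<le> q \<Longrightarrow> q < length (P n i) \<Longrightarrow> P n i ! q = centre \<or> Suc i \<le> fst (P n i ! q)"
    and "1 + 2 * cyclen n i + 2 * cyclen n (Suc i) \<le> q \<Longrightarrow> q < length (P n i) \<Longrightarrow>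
      P n i ! q = centre \<or> i + 2 \<le> fst (P n i ! q)"
proof -
  have "P n i = (centre # cyc (cyclen n) i @ cyc (cyclen n) i)
      @ cyc (cyclen n) (Suc i) @ cyc (cyclen n) (Suc i) @ tail n (Suc (Suc i)) @ [centre]"
    using i by (simp add: P_mid tail_Cons)
  note pos = tail_positions[OF _ i(2) this]
  have len: "length (cyc (cyclen n) i) = cyclen n i" using length_cyc_cyclen i by simp
  show "length (P n i) = 1 + 2 * cyclen n i + 2 * cyclen n (Suc i) + length (tail n (i + 2)) + 1"
    using pos(1) len by simp
  show "s < cyclen n (Suc i) \<Longrightarrow> P n i ! (1 + 2 * cyclen n i + s) = cv n (Suc i) s"
    using pos(2)[of s] len by (simp add: mult_2)
  show "1 + 2 * cyclen n i \<le> q \<Longrightarrow> q < length (P n i) \<Longrightarrow> P n i ! q = centre \<or> Suc i \<le> fst (P n i ! q)"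
    using pos(3)[of q] len by (simp add: mult_2)
  show "1 + 2 * cyclen n i + 2 * cyclen n (Suc i) \<le> q \<Longrightarrow> q < length (P n i) \<Longrightarrow>
      P n i ! q = centre \<or> i + 2 \<le> fst (P n i ! q)"
    using pos(4)[of q] len by (simp add: mult_2)
qed

lemma length_spiral_ge: "cyclen n 1 \<le> spiral_len n"
  using spiral_last[of n] length_cyc[of "cyclen n" 1] by (auto simp add: spiral_len_def split: if_splits)

lemma nth_P_1_spiral: assumes "1 \<le> n" "idx < spiral_len n"
  shows "P n 1 ! idx = centre \<or> fst (P n 1 ! idx) = 1"
proof -
  have "P n 1 ! idx \<in> set (spiral n)"
    using P_1[OF assms(1)] nth_append_mem_left[of idx "spiral n"] assms(2) by (simp add: spiral_len_def)
  thus ?thesis by (rule set_spiral)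
qed

lemma nth_P_1_spiral_len: "1 \<le> n \<Longrightarrow> P n 1 ! spiral_len n = centre"
  using P_1[of n] by (simp add: spiral_len_def nth_append)

lemma nth_P_1_cycle1_lt: assumes n: "2 \<le> n" and idx: "idx < length (P n 1)"
    and v: "P n 1 ! idx \<noteq> centre" "fst (P n 1 ! idx) = 1"
  shows "idx < spiral_len n"
proof (rule ccontr)
  assume "\<not> idx < spiral_len n"
  moreover have "idx \<noteq> spiral_len n" using nth_P_1_spiral_len n v by auto
  ultimately show False using P_1_positions(3)[of n idx] n idx v by (simp add: spiral_len_def)
qed

lemma P_1_marker: assumes "2 \<le> n"
  shows "P n 1 ! (spiral_len n + 2) = (2, 1)" and "spiral_len n + 2 < length (P n 1)"
  using P_1_positions(1)[OF assms] P_1_positions(2)[OF assms, of 1] cyclen_ge_2[of 2 n] assms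
  by (simp_all add: cv_def)

lemma nth_P_1_before_marker: assumes n: "2 \<le> n" and idx: "idx < spiral_len n + 2"
  shows "P n 1 ! idx = centre \<or> fst (P n 1 ! idx) = 1"
proof -
  consider "idx < spiral_len n" | "idx = spiral_len n" | "idx = spiral_len n + 1 + 0" using idx by linarith
  thus ?thesis
  proof cases
    case 3 thus ?thesis using P_1_positions(2)[OF n, of 0] cyclen_ge_2[of 2 n] n by (simp add: cv_def)
  qed (use nth_P_1_spiral nth_P_1_spiral_len n in auto)
qed

lemma iter_T_phi: "escaping x \<Longrightarrow> (T^^t) x M = phi M ((T^^t) x (Suc M))"
  using iter_T_proj[of x M "Suc M" t] by simp

lemma iter_T_above_cycle1:
  assumes x: "escaping x" and M: "2 \<le> M" and v: "(T^^t) x M \<noteq> centre" "fst ((T^^t) x M) = 1"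
  shows "\<exists>q. (T^^t) x (Suc M) = (1, q) \<and> 1 \<le> q \<and> q < spiral_len M"
proof -
  obtain p q where u: "(T^^t) x (Suc M) = (p, q)" by (cases "(T^^t) x (Suc M)")
  have pu: "phi M (p, q) = (T^^t) x M" using iter_T_phi[OF x, of t M] u by simp
  have V: "1 \<le> p" "1 \<le> q" "q < length (P M p)"
    using iter_T_mem_V[OF x, of t "Suc M"] u pu v by (auto simp add: mem_V_iff cyclen_Suc)
  have pv: "P M p ! q = (T^^t) x M" using pu V by (simp add: phi_pair)
  have "p = 1"
  proof (rule ccontr)
    assume "p \<noteq> 1"
    hence "p \<le> fst (P M p ! q)" using set_P[OF nth_mem[OF V(3)]] pv v V by auto
    thus False using pv v \<open>p \<noteq> 1\<close> V by simp
  qed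
  moreover have "q < spiral_len M" using nth_P_1_cycle1_lt[OF M] V pv v \<open>p = 1\<close> by simp
  ultimately show ?thesis using u V by auto
qed

text \<open>Above a vertex of c_{M,1} the points sit inside the spiral of c_{M+1,1}, which is followed
  by the centre and then the vertex (2,1) of c_{M,2}. Of two points at different spiral positions
  the one further ahead reaches (2,1) at level M while the other still projects to the centre or
  into c_{M,1}, so they cannot agree at level M.\<close>

lemma spiral_position_le:
  assumes x: "escaping x" and y: "escaping y" and M: "2 \<le> M"
    and agree: "\<And>t. T0 \<le> t \<Longrightarrow> (T^^t) x M = (T^^t) y M \<or> (off_low ((T^^t) x M) \<and> off_low ((T^^t) y M))"
    and qx: "(T^^T0) x (Suc M) = (1, qx)" "1 \<le> qx"
    and qy: "(T^^T0) y (Suc M) = (1, qy)" "qy < spiral_len M"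
  shows "qy \<le> qx"
proof (rule ccontr)
  assume lt: "\<not> qy \<le> qx"
  define s where "s = spiral_len M + 2 - qy"
  have len: "spiral_len M + 2 < cyclen (Suc M) 1" using P_1_marker(2)[OF M] by (simp add: cyclen_Suc)
  have "(T^^(T0 + s)) y (Suc M) = (1, spiral_len M + 2)"
    using iter_T_forward[OF y qy(1), of s] len qy lt by (simp add: s_def)
  hence yM: "(T^^(T0 + s)) y M = (2, 1)"
    using iter_T_phi[OF y, of "T0 + s" M] P_1_marker(1)[OF M] by (simp add: phi_pair)
  have "(T^^(T0 + s)) x (Suc M) = (1, qx + s)"
    using iter_T_forward[OF x qx(1) qx(2), of s] len qy lt by (simp add: s_def)
  hence "(T^^(T0 + s)) x M = P M 1 ! (qx + s)"
    using iter_T_phi[OF x, of "T0 + s" M] by (simp add: phi_pair)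
  moreover have "qx + s < spiral_len M + 2" using lt qy by (simp add: s_def)
  ultimately have "(T^^(T0 + s)) x M = centre \<or> fst ((T^^(T0 + s)) x M) = 1"
    using nth_P_1_before_marker[OF M] by simp
  moreover have "(T^^(T0 + s)) x M = (T^^(T0 + s)) y M"
    using agree[of "T0 + s"] yM by (auto simp add: off_low_def centre_def)
  ultimately show False using yM by (auto simp add: centre_def)
qed

lemma agree_above_cycle1:
  assumes x: "escaping x" and y: "escaping y" and M: "2 \<le> M"
    and agree: "\<And>t. T0 \<le> t \<Longrightarrow> (T^^t) x M = (T^^t) y M \<or> (off_low ((T^^t) x M) \<and> off_low ((T^^t) y M))"
    and eq: "(T^^T0) x M = (T^^T0) y M" and v: "(T^^T0) x M \<noteq> centre" "fst ((T^^T0) x M) = 1"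
  shows "(T^^T0) x (Suc M) = (T^^T0) y (Suc M) \<and> (T^^T0) x (Suc M) \<noteq> centre \<and> fst ((T^^T0) x (Suc M)) = 1"
proof -
  obtain qx where qx: "(T^^T0) x (Suc M) = (1, qx)" "1 \<le> qx" "qx < spiral_len M"
    using iter_T_above_cycle1[OF x M v] by blast
  obtain qy where qy: "(T^^T0) y (Suc M) = (1, qy)" "1 \<le> qy" "qy < spiral_len M"
    using iter_T_above_cycle1[OF y M] v eq by fastforce
  have agree': "\<And>t. T0 \<le> t \<Longrightarrow> (T^^t) y M = (T^^t) x M \<or> (off_low ((T^^t) y M) \<and> off_low ((T^^t) x M))"
    using agree by metis
  have "qx = qy"
    using spiral_position_le[OF x y M agree qx(1,2) qy(1,3)]
      spiral_position_le[OF y x M agree' qy(1,2) qx(1,3)] by simp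
  thus ?thesis using qx qy by (simp add: centre_def)
qed

lemma agree_all_levels:
  assumes x: "escaping x" and y: "escaping y"
    and agree2: "\<And>t. T0 \<le> t \<Longrightarrow> (T^^t) x 2 = (T^^t) y 2"
    and v: "(T^^T0) x 2 \<noteq> centre" "fst ((T^^T0) x 2) = 1"
  shows "2 \<le> M \<Longrightarrow> (T^^T0) x M = (T^^T0) y M \<and> (T^^T0) x M \<noteq> centre \<and> fst ((T^^T0) x M) = 1"
proof (induction M rule: dec_induct)
  case (step M)
  have "\<And>t. T0 \<le> t \<Longrightarrow> (T^^t) x M = (T^^t) y M \<or> (off_low ((T^^t) x M) \<and> off_low ((T^^t) y M))"
    using agree_or_off_low[OF x y step.hyps(1) agree2] step.IH by blast
  thus ?case using agree_above_cycle1[OF x y step.hyps(1)] step.IH by blast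
qed (use agree2 v in simp)

lemma eq_if_agree_all_levels:
  assumes x: "escaping x" and y: "escaping y"
    and agree: "\<And>M. 2 \<le> M \<Longrightarrow> (T^^t) x M = (T^^t) y M"
    and same_cycle: "\<And>n. N \<le> n \<Longrightarrow> fst (x n) = fst (y n)"
  shows "x = y"
proof -
  obtain Kx where Kx: "\<And>n. Kx \<le> n \<Longrightarrow> x n \<noteq> centre \<and> t < remaining n (x n)"
    using escaping_remaining_gt[OF x] by blast
  obtain Ky where Ky: "\<And>n. Ky \<le> n \<Longrightarrow> y n \<noteq> centre \<and> t < remaining n (y n)"
    using escaping_remaining_gt[OF y] by blast
  have "x n = y n" if n: "max (max Kx Ky) (max N 2) \<le> n" for n
  proof -
    have "(fst (x n), snd (x n) + t) = (fst (y n), snd (y n) + t)"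
      using iter_T_advance[OF x, of n t] iter_T_advance[OF y, of n t] Kx[of n] Ky[of n] agree[of n] n by simp
    thus ?thesis using same_cycle[of n] n by (simp add: prod_eq_iff)
  qed
  with x y show ?thesis
    by (intro X_eq_if_eventually_eq[where N = "max (max Kx Ky) (max N 2)"]) (auto simp add: escaping_def)
qed

lemma periodic_eq_on_tail:
  fixes f :: "nat \<Rightarrow> 'a"
  assumes periodic: "\<And>t. t0 \<le> t \<Longrightarrow> t + D < \<rho> \<Longrightarrow> f t = f (t + D)" and D: "0 < D"
    and tail: "\<And>t. \<rho> - D \<le> t \<Longrightarrow> t < \<rho> \<Longrightarrow> f t = c"
  shows "t0 \<le> t \<Longrightarrow> t < \<rho> \<Longrightarrow> f t = c"
proof (induction "\<rho> - t" arbitrary: t rule: less_induct)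
  case less
  show ?case
  proof (cases "\<rho> - D \<le> t")
    case False
    hence "t + D < \<rho>" by linarith
    thus ?thesis using periodic less.hyps[of "t + D"] less.prems D by simp
  qed (use tail less.prems in simp)
qed

lemma proj_Suc_pair: "m \<le> n \<Longrightarrow> 1 \<le> i \<Longrightarrow> proj (Suc n - m) m (i, idx) = proj (n - m) m (P n i ! idx)"
  by (simp add: Suc_diff_le phi_pair)

text \<open>Let w and z sit on the same cycle of G_M, z ahead of w by D, and let
  their orbits agree on level m from time t0 on. While both run along the cycle, the level-m
  projection of w's orbit is then D-periodic. If the last R \<ge> D vertices of the cycle project to
  the centre, periodicity spreads this backwards, so every vertex that w passes after time t0
  projects to the centre.\<close>

lemma proj_centre_if_offset:
  assumes w: "escaping w" and z: "escaping z"
    and wM: "w M = (i, aw)" and zM: "z M = (i, az)" and i: "1 \<le> i"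
    and ahead: "aw < az" and aw: "1 \<le> aw" and az: "az < cyclen M i" and m: "m \<le> M"
    and agree: "\<And>t. t0 \<le> t \<Longrightarrow> (T^^t) z m = (T^^t) w m"
    and R: "az - aw \<le> R" "R \<le> cyclen M i"
    and tail_centre: "\<And>idx. cyclen M i - R \<le> idx \<Longrightarrow> idx < cyclen M i \<Longrightarrow> proj (M - m) m (i, idx) = centre"
    and e: "aw + t0 \<le> e" "e < cyclen M i - R"
  shows "proj (M - m) m (i, e) = centre"
proof -
  define f where "f t = (T^^t) w m" for t
  define \<rho> where "\<rho> = cyclen M i - aw"
  have wne: "w M \<noteq> centre" and zne: "z M \<noteq> centre" using wM zM aw ahead by (simp_all add: centre_def)
  have wpos: "f t = proj (M - m) m (i, aw + t)" if "t < \<rho>" for t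
    using iter_T_advance[OF w wne, of t] iter_T_proj[OF w m, of t] wM that
    by (simp add: f_def remaining_def \<rho>_def)
  have zpos: "(T^^t) z m = proj (M - m) m (i, az + t)" if "t + (az - aw) < \<rho>" for t
    using iter_T_advance[OF z zne, of t] iter_T_proj[OF z m, of t] zM ahead that
    by (simp add: remaining_def \<rho>_def)
  have "f t = centre" if "t0 \<le> t" "t < \<rho>" for t
  proof (rule periodic_eq_on_tail[of t0 "az - aw" \<rho> f centre, OF _ _ _ that])
    show "f t = f (t + (az - aw))" if "t0 \<le> t" "t + (az - aw) < \<rho>" for t
      using agree[OF that(1)] zpos[OF that(2)] wpos[of "t + (az - aw)"] that ahead
      by (simp add: f_def add.commute)
    show "f t = centre" if "\<rho> - (az - aw) \<le> t" "t < \<rho>" for t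
      using wpos[OF that(2)] tail_centre[of "aw + t"] that R by (simp add: \<rho>_def)
  qed (use ahead in simp)
  thus ?thesis using wpos[of "e - aw"] e R by (simp add: \<rho>_def)
qed

lemma length_tail: "1 \<le> i \<Longrightarrow> length (tail n i) = (\<Sum>k=i..n. 2 * cyclen n k)"
proof -
  assume i: "1 \<le> i"
  have "length (tail n i) = sum_list (map (\<lambda>k. 2 * cyclen n k) [i..<n+1])"
    unfolding tail_def length_concat map_map
    by (intro arg_cong[where f = sum_list] map_cong) (use i length_cyc_cyclen in auto)
  thus ?thesis by (simp add: sum_list_distinct_conv_sum_set atLeastLessThanSuc_atLeastAtMost)
qed

lemma cyclen_le_top: assumes i: "2 \<le> i" "i < n" shows "cyclen n i \<le> cyclen n n"
proof -
  obtain n' where n': "n = Suc n'" using i by (cases n) auto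
  define S where "S = (\<Sum>k=1..n'. cyclen n' k)"
  have S: "1 \<le> S" using cyclen_ge_2[of 1 n'] i n' le_sum_Icc[of 1 n' "cyclen n'"] by (simp add: S_def)
  have "(\<Sum>k=i..n'. 2 * cyclen n' k) \<le> (\<Sum>k=1..n'. 2 * cyclen n' k)" using i by (intro sum_mono2) auto
  hence "cyclen n i \<le> 2 + 2 * S"
    using i n' by (simp add: cyclen_Suc P_mid length_tail S_def sum_distrib_left[symmetric])
  also have "\<dots> \<le> 9 * S" using S by simp
  also have "\<dots> \<le> (n' + 2)^2 * S" using i n' by (intro mult_right_mono) (auto simp add: power2_eq_square)
  also have "\<dots> = cyclen n n" using n' i P_top[of n'] by (simp add: cyclen_Suc S_def)
  finally show ?thesis .
qed

lemma nth_P_mid_cycle_lt: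
  assumes "2 \<le> i" "Suc i \<le> n" "q < length (P n i)" "P n i ! q \<noteq> centre" "fst (P n i ! q) = i"
  shows "q < 1 + 2 * cyclen n i"
  using P_mid_positions(3)[OF assms(1,2), of q] assms by (cases "1 + 2 * cyclen n i \<le> q") auto

lemma nth_P_mid_run_end:
  assumes i: "2 \<le> i" "Suc i \<le> n" and q: "q < length (P n i)" and pq: "P n i ! q = (i, j)"
    and j: "1 \<le> j" "j < cyclen n i"
  shows "q + (cyclen n i - j) \<le> 1 + 2 * cyclen n i"
proof -
  define s where "s = cyclen n i - j - 1"
  have "q + s < length (P n i) \<and> P n i ! (q + s) = (i, j + s)"
    using P_run[OF q pq j(1), of s] j by (simp add: s_def)
  hence "q + s < 1 + 2 * cyclen n i" using nth_P_mid_cycle_lt[OF i, of "q + s"] i by (simp add: centre_def)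
  thus ?thesis using j by (simp add: s_def)
qed

text \<open>For i \<ge> 2 the cycle c_{n+1,i} runs through 2 c_{n,i}, then through c_{n,i+1}, and ends with
  a long stretch on higher cycles, which project to the centre of G_{i+1}. Two points on it at
  distinct positions within the first part would contradict proj_centre_if_offset at a vertex
  of c_{n,i+1}.\<close>

lemma offset_impossible_deg_ge2:
  assumes w: "escaping w" and z: "escaping z" and i: "2 \<le> i" and n: "i + 2 \<le> n"
    and wn: "w n \<noteq> centre" "fst (w n) = i" and zn: "z n \<noteq> centre" "fst (z n) = i"
    and wS: "w (Suc n) = (i, aw)" and zS: "z (Suc n) = (i, az)"
    and agree: "\<And>t. t0 \<le> t \<Longrightarrow> (T^^t) z (Suc i) = (T^^t) w (Suc i)"
    and remw: "t0 < remaining n (w n)"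
  shows "az \<le> aw"
proof (rule ccontr)
  assume "\<not> az \<le> aw"
  hence ahead: "aw < az" by simp
  have wX: "w \<in> X" and zX: "z \<in> X" using w z by (simp_all add: escaping_def)
  have aw: "1 \<le> aw" using X_mem_V[OF wX, of "Suc n"] wS i by (auto simp add: mem_V_iff centre_def)
  have az: "az < cyclen (Suc n) i" using X_mem_V[OF zX, of "Suc n"] zS ahead by (auto simp add: mem_V_iff centre_def)
  have Li: "n + 1 \<le> cyclen n i" "n + 1 \<le> cyclen n (Suc i)" using cyclen_ge_Suc i n by auto
  have "P n i ! az = z n" using X_phi[OF zX, of n] zS i by (simp add: phi_pair)
  hence az_lt: "az < 1 + 2 * cyclen n i"
    using nth_P_mid_cycle_lt[OF i, of n az] n az zn by (simp add: cyclen_Suc)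
  obtain j where wj: "w n = (i, j)" using wn by (cases "w n") auto
  have j: "1 \<le> j" "j < cyclen n i" using X_mem_V[OF wX, of n] wn wj by (auto simp add: mem_V_iff)
  have "P n i ! aw = (i, j)" using X_phi[OF wX, of n] wS wj i by (simp add: phi_pair)
  hence aw_end: "aw + remaining n (w n) \<le> 1 + 2 * cyclen n i"
    using nth_P_mid_run_end[OF i _ _ _ j, of aw] n az ahead wj by (simp add: cyclen_Suc remaining_def)
  define R where "R = length (tail n (i + 2)) + 1"
  have len: "cyclen (Suc n) i = 1 + 2 * cyclen n i + 2 * cyclen n (Suc i) + R"
    using P_mid_positions(1)[OF i, of n] n by (simp add: cyclen_Suc R_def)
  have "2 * cyclen n i \<le> length (tail n (i + 2))"
    using cyclen_le_top[of i n] length_tail_ge[of "i + 2" n] i n by simp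
  hence R: "az - aw \<le> R" using az_lt aw by (simp add: R_def)
  define e where "e = 1 + 2 * cyclen n i + (n - i)"
  have "proj (Suc n - Suc i) (Suc i) (i, e) = centre"
  proof (rule proj_centre_if_offset[OF w z wS zS _ ahead aw az _ agree R])
    show "proj (Suc n - Suc i) (Suc i) (i, idx) = centre"
      if "cyclen (Suc n) i - R \<le> idx" "idx < cyclen (Suc n) i" for idx
    proof -
      have "P n i ! idx \<in> V n" using that by (intro mem_V_if_mem_P[where i=i]) (simp add: cyclen_Suc)
      moreover have "P n i ! idx = centre \<or> Suc i < fst (P n i ! idx)"
        using P_mid_positions(4)[OF i, of n idx] that len n by (auto simp add: cyclen_Suc)
      ultimately show ?thesis
        using n i proj_above_diff[of "P n i ! idx" n "Suc i"] proj_Suc_pair[of "Suc i" n i idx] by simp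
    qed
    show "aw + t0 \<le> e" using aw_end remw by (simp add: e_def)
  qed (use len Li i n in \<open>auto simp add: e_def\<close>)
  moreover have "P n i ! e = (Suc i, n - i)"
    using P_mid_positions(2)[OF i, of n "n - i"] Li n by (simp add: e_def cv_def)
  hence "proj (Suc n - Suc i) (Suc i) (i, e) = (Suc i, 1)"
    using n i proj_Suc_pair[of "Suc i" n i e] by (simp add: proj_cyc Suc_diff_Suc)
  ultimately show False by (simp add: centre_def)
qed

lemma nth_P_1_last_spiral:
  assumes n: "1 \<le> n" and s: "s < cyclen n 1"
  shows "spiral_len n - cyclen n 1 + s < spiral_len n \<and> P n 1 ! (spiral_len n - cyclen n 1 + s) = cv n 1 s"
proof -
  obtain L where L: "spiral n = L @ cyc (cyclen n) 1" using spiral_last by blast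
  have len: "length (cyc (cyclen n) 1) = cyclen n 1" using length_cyc_cyclen n by simp
  have start: "spiral_len n - cyclen n 1 = length L" using L len by (simp add: spiral_len_def)
  have "P n 1 = L @ (cyc (cyclen n) 1 @ centre # tail n 2 @ [centre])" using P_1[OF n] L by simp
  hence "P n 1 ! (length L + s) = (cyc (cyclen n) 1 @ centre # tail n 2 @ [centre]) ! s"
    by (simp only: nth_append_length_plus)
  hence "P n 1 ! (spiral_len n - cyclen n 1 + s) = cyc (cyclen n) 1 ! s"
    using s len unfolding start by (simp add: nth_append)
  thus ?thesis using s len start cyclen_ge_2[of 1 n] n L by (simp add: nth_cyc spiral_len_def)
qed

text \<open>In degree one, a point whose level-2 orbit avoids c_{2,1} must sit on the last copy of
  c_{n,1} in the spiral: from any earlier position it would walk into that copy, whose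
  (n-1)-th vertex projects onto (1,1) in G_2.\<close>

lemma lift_last_spiral:
  assumes x: "escaping x" and n: "2 \<le> n" and xn: "x n = (1, a)" and xS: "x (Suc n) = (1, b)"
    and avoid: "\<And>t. t0 \<le> t \<Longrightarrow> (T^^t) x 2 = centre \<or> fst ((T^^t) x 2) \<noteq> 1"
    and rem: "t0 < remaining n (x n)"
  shows "b = spiral_len n - cyclen n 1 + a"
proof -
  have xX: "x \<in> X" using x by (simp add: escaping_def)
  have L: "n + 1 \<le> cyclen n 1" using cyclen_ge_Suc[of 1 n] n by simp
  have a: "1 \<le> a" "a < cyclen n 1" using X_mem_V[OF xX, of n] xn by (auto simp add: mem_V_iff centre_def)
  have b: "1 \<le> b" "b < length (P n 1)"
    using X_mem_V[OF xX, of "Suc n"] xS by (auto simp add: mem_V_iff centre_def cyclen_Suc)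
  have pb: "P n 1 ! b = (1, a)" using X_phi[OF xX, of n] xS xn by (simp add: phi_pair)
  have b_spiral: "b < spiral_len n" using nth_P_1_cycle1_lt[OF n b(2)] pb by (simp add: centre_def)
  define c where "c = spiral_len n - cyclen n 1"
  show ?thesis
  proof (cases "c \<le> b")
    case True
    have "P n 1 ! b = cv n 1 (b - c)" using nth_P_1_last_spiral[of n "b - c"] True b_spiral n by (simp add: c_def)
    thus ?thesis using pb True b_spiral by (auto simp add: c_def cv_def centre_def split: if_splits)
  next
    case False
    have pc: "P n 1 ! c = centre" using nth_P_1_last_spiral[of n 0] L n by (simp add: c_def cv_def)
    have far: "cyclen n 1 - a \<le> c - b"
    proof (rule ccontr)
      assume "\<not> ?thesis"
      hence "P n 1 ! (b + (c - b)) = (1, a + (c - b))" using P_run[OF b(2) pb a(1), of "c - b"] by simp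
      thus False using pc False by (simp add: centre_def)
    qed
    define e where "e = c + (n - 1)"
    have pe: "P n 1 ! e = (1, n - 1)" and e: "e < spiral_len n"
      using nth_P_1_last_spiral[of n "n - 1"] L n by (simp_all add: e_def c_def cv_def)
    have "spiral_len n < length (P n 1)" using P_1_marker(2)[OF n] by simp
    hence "(T^^(e - b)) x (Suc n) = (1, e)"
      using iter_T_advance[OF x, of "Suc n" "e - b"] xS e False by (simp add: remaining_def cyclen_Suc e_def centre_def)
    hence "(T^^(e - b)) x 2 = proj (Suc n - 2) 2 (1, e)" using iter_T_proj[OF x, of 2 "Suc n" "e - b"] n by simp
    also have "\<dots> = (1, 1)"
      using n pe proj_Suc_pair[of 2 n 1 e] proj_cyc[of 1 2 "n - 1" "n - 2"]
      by (simp add: Suc_diff_Suc numeral_2_eq_2)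
    finally have "(T^^(e - b)) x 2 = (1, 1)" .
    moreover have "t0 \<le> e - b" using far rem xn False by (simp add: e_def remaining_def)
    ultimately show ?thesis using avoid[of "e - b"] by (simp add: centre_def)
  qed
qed

text \<open>For i = 1 the last spiral copy of c_{n,1} in c_{n+1,1} is followed by the centre, then by
  c_{n,2}, and the cycle ends with the long stretch tail n 3 on higher cycles; the argument is
  that of offset_impossible_deg_ge2 with m = 2.\<close>

lemma offset_impossible_deg1:
  assumes w: "escaping w" and z: "escaping z" and n: "3 \<le> n"
    and wn: "w n = (1, a)" and zn: "z n = (1, b)"
    and wS: "w (Suc n) = (1, spiral_len n - cyclen n 1 + a)"
    and zS: "z (Suc n) = (1, spiral_len n - cyclen n 1 + b)"
    and small: "b - a \<le> 2 * cyclen n n"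
    and agree: "\<And>t. t0 \<le> t \<Longrightarrow> (T^^t) z 2 = (T^^t) w 2"
    and remw: "t0 < remaining n (w n)"
  shows "b \<le> a"
proof (rule ccontr)
  assume "\<not> b \<le> a"
  hence ahead: "a < b" by simp
  have wX: "w \<in> X" and zX: "z \<in> X" using w z by (simp_all add: escaping_def)
  have n1: "1 \<le> n" and n2: "2 \<le> n" using n by simp_all
  have L: "n + 1 \<le> cyclen n 1" "n + 1 \<le> cyclen n 2" using cyclen_ge_Suc n by auto
  have a: "1 \<le> a" "a < cyclen n 1" using X_mem_V[OF wX, of n] wn by (auto simp add: mem_V_iff centre_def)
  have b: "b < cyclen n 1" using X_mem_V[OF zX, of n] zn ahead by (auto simp add: mem_V_iff centre_def)
  have spiral: "cyclen n 1 \<le> spiral_len n" by (rule length_spiral_ge)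
  define R where "R = length (tail n 3) + 1"
  have len: "cyclen (Suc n) 1 = spiral_len n + 1 + 2 * cyclen n 2 + R"
    using P_1_positions(1)[OF n2] by (simp add: cyclen_Suc R_def)
  have R: "b - a \<le> R" using small length_tail_ge[of 3 n] n by (simp add: R_def)
  define e where "e = spiral_len n + 1 + (n - 1)"
  have "proj (Suc n - 2) 2 (1, e) = centre"
  proof (rule proj_centre_if_offset[OF w z wS zS _ _ _ _ _ agree])
    show "proj (Suc n - 2) 2 (1, idx) = centre"
      if "cyclen (Suc n) 1 - R \<le> idx" "idx < cyclen (Suc n) 1" for idx
    proof -
      have "P n 1 ! idx \<in> V n" using that by (intro mem_V_if_mem_P[where i=1]) (simp add: cyclen_Suc)
      moreover have "P n 1 ! idx = centre \<or> 2 < fst (P n 1 ! idx)"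
        using P_1_positions(4)[OF n2, of idx] that len by (auto simp add: cyclen_Suc)
      ultimately show ?thesis
        using n proj_above_diff[of "P n 1 ! idx" n 2] proj_Suc_pair[of 2 n 1 idx] by simp
    qed
  qed (use ahead a b spiral len R remw wn L n in \<open>auto simp add: e_def remaining_def\<close>)
  moreover have "P n 1 ! e = (2, n - 1)"
    using P_1_positions(2)[OF n2, of "n - 1"] L n by (simp add: e_def cv_def)
  hence "proj (Suc n - 2) 2 (1, e) = (2, 1)"
    using n proj_Suc_pair[of 2 n 1 e] proj_cyc[of 2 2 "n - 1" "n - 2"] by (simp add: Suc_diff_Suc numeral_2_eq_2)
  ultimately show False by (simp add: centre_def)
qed

text \<open>Along the last spiral copies the offset between the two points stays constant while the
  cycles keep growing, so eventually offset_impossible_deg1 applies.\<close>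

lemma offset_impossible_deg1_eventually:
  assumes w: "escaping w" and z: "escaping z" and N: "3 \<le> N"
    and on: "\<And>n. N \<le> n \<Longrightarrow> w n = (1, snd (w n)) \<and> z n = (1, snd (z n))"
    and lift: "\<And>n. N \<le> n \<Longrightarrow> snd (w (Suc n)) = spiral_len n - cyclen n 1 + snd (w n)
      \<and> snd (z (Suc n)) = spiral_len n - cyclen n 1 + snd (z n)"
    and agree: "\<And>t. t0 \<le> t \<Longrightarrow> (T^^t) z 2 = (T^^t) w 2"
    and remw: "\<And>n. N \<le> n \<Longrightarrow> t0 < remaining n (w n)"
  shows "snd (z N) \<le> snd (w N)"
proof (rule ccontr)
  assume ahead: "\<not> ?thesis"
  define D where "D = snd (z N) - snd (w N)"
  have offset: "snd (w n) < snd (z n) \<and> snd (z n) - snd (w n) = D" if "N \<le> n" for n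
    using that
  proof (induction n rule: dec_induct)
    case (step n) thus ?case using lift[of n] by simp
  qed (use ahead in \<open>simp add: D_def\<close>)
  define n where "n = max N D"
  have n: "3 \<le> n" "N \<le> n" "D \<le> n" using N by (simp_all add: n_def)
  have "snd (z n) \<le> snd (w n)"
  proof (rule offset_impossible_deg1[OF w z n(1) _ _ _ _ _ agree remw[OF n(2)]])
    show "w n = (1, snd (w n))" "z n = (1, snd (z n))" using on n by auto
    show "w (Suc n) = (1, spiral_len n - cyclen n 1 + snd (w n))"
      "z (Suc n) = (1, spiral_len n - cyclen n 1 + snd (z n))"
      using on[of "Suc n"] lift[of n] n by auto
    show "snd (z n) - snd (w n) \<le> 2 * cyclen n n" using offset[of n] n cyclen_ge_Suc[of n n] by simp
  qed
  thus False using offset[OF n(2)] by simp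
qed

lemma eq_if_agree_deg1:
  assumes x: "escaping x" and y: "escaping y"
    and on: "\<And>n. N \<le> n \<Longrightarrow> x n \<noteq> centre \<and> fst (x n) = 1 \<and> y n \<noteq> centre \<and> fst (y n) = 1"
    and agree: "\<And>t. t0 \<le> t \<Longrightarrow> (T^^t) x 2 = (T^^t) y 2"
    and avoid: "\<And>t. t0 \<le> t \<Longrightarrow> (T^^t) x 2 = centre \<or> fst ((T^^t) x 2) \<noteq> 1"
  shows "x = y"
proof -
  obtain Kx where Kx: "\<And>n. Kx \<le> n \<Longrightarrow> x n \<noteq> centre \<and> t0 < remaining n (x n)"
    using escaping_remaining_gt[OF x] by blast
  obtain Ky where Ky: "\<And>n. Ky \<le> n \<Longrightarrow> y n \<noteq> centre \<and> t0 < remaining n (y n)"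
    using escaping_remaining_gt[OF y] by blast
  define N1 where "N1 = max (max N 3) (max Kx Ky)"
  have pair: "x n = (1, snd (x n)) \<and> y n = (1, snd (y n))" if "N1 \<le> n" for n
    using on[of n] that by (auto simp add: N1_def prod_eq_iff)
  have avoid_y: "\<And>t. t0 \<le> t \<Longrightarrow> (T^^t) y 2 = centre \<or> fst ((T^^t) y 2) \<noteq> 1"
    using avoid agree by metis
  have lift: "snd (x (Suc n)) = spiral_len n - cyclen n 1 + snd (x n)
      \<and> snd (y (Suc n)) = spiral_len n - cyclen n 1 + snd (y n)" if "N1 \<le> n" for n
    using lift_last_spiral[OF x _ _ _ avoid] lift_last_spiral[OF y _ _ _ avoid_y]
      pair[of n] pair[of "Suc n"] Kx[of n] Ky[of n] that by (simp add: N1_def)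
  have "x n = y n" if n: "N1 \<le> n" for n
  proof -
    have "snd (y n) \<le> snd (x n)"
      by (rule offset_impossible_deg1_eventually[OF x y _ _ _ agree[symmetric]])
        (use n pair lift Kx in \<open>auto simp add: N1_def\<close>)
    moreover have "snd (x n) \<le> snd (y n)"
      by (rule offset_impossible_deg1_eventually[OF y x _ _ _ agree])
        (use n pair lift Ky in \<open>auto simp add: N1_def\<close>)
    ultimately show ?thesis using pair[OF n] by (simp add: prod_eq_iff)
  qed
  thus ?thesis using x y X_eq_if_eventually_eq[of x y N1] by (simp add: escaping_def)
qed

lemma eq_if_agree_deg_ge2:
  assumes x: "escaping x" and y: "escaping y" and i: "2 \<le> i"
    and on: "\<And>n. N \<le> n \<Longrightarrow> x n \<noteq> centre \<and> fst (x n) = i \<and> y n \<noteq> centre \<and> fst (y n) = i"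
    and agree: "\<And>t. t0 \<le> t \<Longrightarrow> (T^^t) x (Suc i) = (T^^t) y (Suc i)"
  shows "x = y"
proof -
  obtain Kx where Kx: "\<And>n. Kx \<le> n \<Longrightarrow> x n \<noteq> centre \<and> t0 < remaining n (x n)"
    using escaping_remaining_gt[OF x] by blast
  obtain Ky where Ky: "\<And>n. Ky \<le> n \<Longrightarrow> y n \<noteq> centre \<and> t0 < remaining n (y n)"
    using escaping_remaining_gt[OF y] by blast
  define N1 where "N1 = max (max N (i + 2)) (max Kx Ky)"
  have "x (Suc n) = y (Suc n)" if n: "N1 \<le> n" for n
  proof -
    have xS: "x (Suc n) = (i, snd (x (Suc n)))" and yS: "y (Suc n) = (i, snd (y (Suc n)))"
      using on[of "Suc n"] n by (auto simp add: N1_def prod_eq_iff)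
    have "snd (y (Suc n)) \<le> snd (x (Suc n))"
      by (rule offset_impossible_deg_ge2[OF x y i _ _ _ _ _ xS yS agree[symmetric]])
        (use n on[of n] Kx[of n] in \<open>auto simp add: N1_def\<close>)
    moreover have "snd (x (Suc n)) \<le> snd (y (Suc n))"
      by (rule offset_impossible_deg_ge2[OF y x i _ _ _ _ _ yS xS agree])
        (use n on[of n] Ky[of n] in \<open>auto simp add: N1_def\<close>)
    ultimately show ?thesis using xS yS by simp
  qed
  hence "x n = y n" if "Suc N1 \<le> n" for n using that by (cases n) auto
  thus ?thesis using x y X_eq_if_eventually_eq[of x y "Suc N1"] by (simp add: escaping_def)
qed

lemma eq_if_agree_after_cycle1_visit:
  assumes x: "escaping x" and y: "escaping y"
    and agree2: "\<And>t. T0 \<le> t \<Longrightarrow> (T^^t) x 2 = (T^^t) y 2"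
    and visit: "(T^^T0) x 2 \<noteq> centre" "fst ((T^^T0) x 2) = 1"
    and same_cycle: "\<And>n. N \<le> n \<Longrightarrow> fst (x n) = fst (y n)"
  shows "x = y"
  using eq_if_agree_all_levels[OF x y _ same_cycle] agree_all_levels[OF x y agree2 visit] by blast

lemma asymptotic_eventually_agree:
  assumes lim: "(\<lambda>n. dist_X ((T ^^ n) x) ((T ^^ n) y)) \<longlonglongrightarrow> 0"
  shows "\<exists>t0. \<forall>t \<ge> t0. (T^^t) x m = (T^^t) y m"
proof -
  obtain t0 where t0: "\<And>t. t0 \<le> t \<Longrightarrow> \<bar>dist_X ((T ^^ t) x) ((T ^^ t) y)\<bar> < (1/2)^m"
    using LIMSEQ_D[OF lim, of "(1/2)^m"] by auto
  have "(T^^t) x m = (T^^t) y m" if t: "t0 \<le> t" for t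
  proof (rule ccontr)
    assume ne: "(T^^t) x m \<noteq> (T^^t) y m"
    define k where "k = (LEAST k. (T^^t) x k \<noteq> (T^^t) y k)"
    have "k \<le> m" using Least_le[of "\<lambda>k. (T^^t) x k \<noteq> (T^^t) y k", OF ne] by (simp add: k_def)
    moreover have "dist_X ((T ^^ t) x) ((T ^^ t) y) = (1/2)^k" using ne by (auto simp add: dist_X_def k_def)
    ultimately show False using t0[OF t] power_decreasing[of k m "1/2::real"] by simp
  qed
  thus ?thesis by blast
qed

lemma eq_if_eventually_agree:
  assumes x: "escaping x" and y: "escaping y" and i: "0 < i"
    and on: "\<And>n. N \<le> n \<Longrightarrow> x n \<noteq> centre \<and> fst (x n) = i \<and> y n \<noteq> centre \<and> fst (y n) = i"
    and agree: "\<And>m. \<exists>t0. \<forall>t \<ge> t0. (T^^t) x m = (T^^t) y m"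
  shows "x = y"
proof -
  obtain t2 where agree2: "\<And>t. t2 \<le> t \<Longrightarrow> (T^^t) x 2 = (T^^t) y 2" using agree[of 2] by blast
  show ?thesis
  proof (cases "\<exists>t \<ge> t2. (T^^t) x 2 \<noteq> centre \<and> fst ((T^^t) x 2) = 1")
    case True
    then obtain T0 where T0: "t2 \<le> T0" "(T^^T0) x 2 \<noteq> centre" "fst ((T^^T0) x 2) = 1" by blast
    show ?thesis
      by (rule eq_if_agree_after_cycle1_visit[OF x y _ T0(2,3), where N = N]) (use agree2 T0(1) on in auto)
  next
    case avoid: False
    show ?thesis
    proof (cases "2 \<le> i")
      case True
      obtain t3 where "\<And>t. t3 \<le> t \<Longrightarrow> (T^^t) x (Suc i) = (T^^t) y (Suc i)"
        using agree[of "Suc i"] by blast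
      thus ?thesis by (intro eq_if_agree_deg_ge2[OF x y True, where N = N]) (use on in auto)
    next
      case False
      hence "i = 1" using i by simp
      show ?thesis
        by (rule eq_if_agree_deg1[OF x y, where N = N]) (use on agree2 avoid \<open>i = 1\<close> in auto)
    qed
  qed
qed

theorem lemma3p13:
  fixes x y :: "nat \<Rightarrow> vert" and i :: nat
  assumes "x \<in> X" and "y \<in> X" and "0 < i"
    and "deg x = enat i" and "deg y = enat i"
    and "(\<lambda>n. dist_X ((T ^^ n) x) ((T ^^ n) y)) \<longlonglongrightarrow> 0"
  shows "x = y"
proof -
  have x: "escaping x" and y: "escaping y" using deg_escaping assms by blast+
  obtain Nx Ny where "\<And>n. Nx \<le> n \<Longrightarrow> x n \<noteq> centre \<and> fst (x n) = i"
    and "\<And>n. Ny \<le> n \<Longrightarrow> y n \<noteq> centre \<and> fst (y n) = i"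
    using deg_eventually_on_cycle assms by meson
  thus ?thesis
    by (intro eq_if_eventually_agree[OF x y \<open>0 < i\<close>, where N = "max Nx Ny"])
      (simp_all add: asymptotic_eventually_agree[OF assms(6)])
qed

end
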